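(* Let $\lambda\in\{1,-1\}$, $0<T<\infty$, and let $q(x,t)$ be a sufficiently smooth solution of the NLS equation $iq_t+q_{xx}-2\lambda|q|^2q=0$ on $0<x<\infty$, $0<t<T$, decaying sufficiently fast as $x\to\infty$, with compatible initial and boundary data ($q(0,0)=q_0(0)$). Let $\Phi_1,\Phi_2$, $a,b$, $F$ and $c$ be as in the context, so that the global relation $$c(t,k)=\Phi_1(t,k)+\frac{b(k)}{a(k)}\overline{\Phi_2(t,\bar k)}\,e^{-4ik^2t},\qquad \operatorname{Im}k\ge 0,$$ holds. Then $$c(t,k)=\frac{\Phi_1^{(1)}(t)}{k}+\frac{\Phi_1^{(2)}(t)}{k^2}+O\Big(\frac1{k^3}\Big),\qquad k\to\infty,\ k\in D_1,$$ where $\Phi_1^{(1)}(t)=\frac{g_0(t)}{2i}$ and $\Phi_1^{(2)}(t)=\frac{g_1(t)}{4}-\frac{ig_0(t)}{2}\cdot\frac{\lambda}{2}\int_0^t\big(\bar g_0g_1-g_0\bar g_1\big)(\tau)\,d\tau$ are the coefficients of the large-$k$ expansion $\Phi_1(t,k)=\frac{\Phi_1^{(1)}(t)}{k}+\frac{\Phi_1^{(2)}(t)}{k^2}+O(k^{-3})+O(e^{-4ik^2t}/k)$ valid for $k\in D_2\cup D_4$.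
   Context: $g_0(t)=q(0,t)$, $g_1(t)=q_x(0,t)$, $q_0(x)=q(x,0)$. $\sigma_3=\mathrm{diag}(1,-1)$, $Q(x,t)=\begin{pmatrix}0&q\\ \lambda\bar q&0\end{pmatrix}$. The quadrants are $D_1=\{\operatorname{Re}k>0,\operatorname{Im}k>0\}$, $D_2=\{\operatorname{Re}k<0,\operatorname{Im}k>0\}$, $D_3=\{\operatorname{Re}k<0,\operatorname{Im}k<0\}$, $D_4=\{\operatorname{Re}k>0,\operatorname{Im}k<0\}$. The functions $\Phi_1(t,k),\Phi_2(t,k)$ ($0<t<T$, $k\in\mathbb C$) are the unique solution of $\Phi_1(t,k)=\int_0^t e^{4ik^2(t'-t)}[-i\lambda|g_0|^2\Phi_1+(2kg_0+ig_1)\Phi_2](t',k)\,dt'$, $\Phi_2(t,k)=1+\lambda\int_0^t[(2k\bar g_0-i\bar g_1)\Phi_1+i|g_0|^2\Phi_2](t',k)\,dt'$. For each $t$, let $\mu_3(x,t,k)$ be the $2\times2$ solution of $\mu_3(x,t,k)=I-\int_x^\infty e^{-ik(x-\xi)\hat\sigma_3}(Q\mu_3)(\xi,t,k)\,d\xi$, where $e^{s\hat\sigma_3}M=e^{s\sigma_3}Me^{-s\sigma_3}$; its first column is analytic in $\operatorname{Im}k<0$ and its second column in $\operatorname{Im}k>0$. Let $\Psi(x,k)=\mu_3(x,0,k)$, and let $a(k)=\Psi_{22}(0,k)$, $b(k)=\Psi_{12}(0,k)$ for $\operatorname{Im}k\ge0$. Let $F(t,k)=\mu_3(0,t,k)$;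 its second column is analytic and bounded in $\operatorname{Im}k>0$ with $F=I+O(1/k)$ as $k\to\infty$. Define $c(t,k)=F_{12}(t,k)/a(k)$ for $\operatorname{Im}k\ge0$. *)

theory Defs
  imports "HOL-Analysis.Analysis"
begin

definition px :: "(real \<Rightarrow> real \<Rightarrow> complex) \<Rightarrow> real \<Rightarrow> real \<Rightarrow> complex" where
  "px f x t = vector_derivative (\<lambda>y. f y t) (at x within {0..})"

definition pt :: "real \<Rightarrow> (real \<Rightarrow> real \<Rightarrow> complex) \<Rightarrow> real \<Rightarrow> real \<Rightarrow> complex" where
  "pt T f x t = vector_derivative (\<lambda>s. f x s) (at t within {0..T})"

definition smooth_decaying :: "real \<Rightarrow> (real \<Rightarrow> real \<Rightarrow> complex) \<Rightarrow> bool" where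
  "smooth_decaying T q \<longleftrightarrow>
     (\<forall>m n. let f = (px ^^ m) ((pt T ^^ n) q) in
        (\<forall>x\<ge>0. \<forall>t\<in>{0..T}.
            ((\<lambda>y. f y t) has_vector_derivative px f x t) (at x within {0..}) \<and>
            ((\<lambda>s. f x s) has_vector_derivative pt T f x t) (at t within {0..T})) \<and>
        continuous_on ({0..} \<times> {0..T}) (\<lambda>(x, t). f x t) \<and>
        (\<forall>N::nat. \<exists>C. \<forall>x\<ge>0. \<forall>t\<in>{0..T}. (1 + x) ^ N * norm (f x t) \<le> C))"

definition solves_NLS :: "real \<Rightarrow> real \<Rightarrow> (real \<Rightarrow> real \<Rightarrow> complex) \<Rightarrow> bool" where
  "solves_NLS lam T q \<longleftrightarrow>
     (\<forall>x>0. \<forall>t\<in>{0<..<T}.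
        \<i> * pt T q x t + px (px q) x t
          - 2 * complex_of_real lam * complex_of_real ((norm (q x t))\<^sup>2) * q x t = 0)"

definition g0 :: "(real \<Rightarrow> real \<Rightarrow> complex) \<Rightarrow> real \<Rightarrow> complex" where
  "g0 q t = q 0 t"

definition g1 :: "(real \<Rightarrow> real \<Rightarrow> complex) \<Rightarrow> real \<Rightarrow> complex" where
  "g1 q t = px q 0 t"

text \<open>(Phi1, Phi2) solve the t-part Volterra system (continuous solution, unique).\<close>

definition solves_Phi ::
  "real \<Rightarrow> real \<Rightarrow> (real \<Rightarrow> real \<Rightarrow> complex) \<Rightarrow>
   (real \<Rightarrow> complex \<Rightarrow> complex) \<Rightarrow> (real \<Rightarrow> complex \<Rightarrow> complex) \<Rightarrow> bool" where
  "solves_Phi lam T q Phi1 Phi2 \<longleftrightarrow>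
     (\<forall>k. continuous_on {0..T} (\<lambda>t. Phi1 t k) \<and> continuous_on {0..T} (\<lambda>t. Phi2 t k) \<and>
       (\<forall>t\<in>{0..T}.
          Phi1 t k = integral {0..t} (\<lambda>s. exp (4 * \<i> * k\<^sup>2 * complex_of_real (s - t)) *
              (- \<i> * complex_of_real lam * complex_of_real ((norm (g0 q s))\<^sup>2) * Phi1 s k
               + (2 * k * g0 q s + \<i> * g1 q s) * Phi2 s k)) \<and>
          Phi2 t k = 1 + complex_of_real lam * integral {0..t} (\<lambda>s.
               (2 * k * cnj (g0 q s) - \<i> * cnj (g1 q s)) * Phi1 s k
               + \<i> * complex_of_real ((norm (g0 q s))\<^sup>2) * Phi2 s k)))"

text \<open>Second column (M12, M22) of mu_3(x,t,k), for Im k \<ge> 0: the bounded solution of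
  mu_3 = I - int_x^oo e^{-ik(x-xi) hat sigma_3} (Q mu_3)(xi) d xi, written componentwise.\<close>

definition solves_mu3_col2 ::
  "real \<Rightarrow> real \<Rightarrow> (real \<Rightarrow> real \<Rightarrow> complex) \<Rightarrow>
   (real \<Rightarrow> real \<Rightarrow> complex \<Rightarrow> complex) \<Rightarrow> (real \<Rightarrow> real \<Rightarrow> complex \<Rightarrow> complex) \<Rightarrow> bool" where
  "solves_mu3_col2 lam T q M12 M22 \<longleftrightarrow>
     (\<forall>t\<in>{0..T}. \<forall>k. Im k \<ge> 0 \<longrightarrow>
        (\<exists>B. \<forall>x\<ge>0. norm (M12 x t k) \<le> B \<and> norm (M22 x t k) \<le> B) \<and>
        (\<forall>x\<ge>0.
          ((\<lambda>\<xi>. exp (- \<i> * k * complex_of_real (x - \<xi>)) * q \<xi> t * M22 \<xi> t k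
                  * exp (- \<i> * k * complex_of_real (x - \<xi>)))
             has_integral (- M12 x t k)) {x..} \<and>
          ((\<lambda>\<xi>. complex_of_real lam * cnj (q \<xi> t) * M12 \<xi> t k)
             has_integral (1 - M22 x t k)) {x..}))"

definition D1 :: "complex set" where
  "D1 = {k. Re k > 0 \<and> Im k > 0}"

end

theory Submission
  imports Defs
begin

(* Since c t k = M12 0 t k / M22 0 0 k, it suffices to expand the second column of mu_3 at x = 0
   to second order in 1/k. For Im k \<ge> 0 its Volterra equations have kernels bounded by 1, so a
   Gronwall argument bounds the column uniformly in k, and integrating by parts against the oscillating
   factor exp (2 i k (xi - x)) gives

     M12 (0, s, k) = q / (2 i k) + (q_x + lam q N(s)) / (4 k^2) + O(k^-3),
     M22 (0, s, k) = 1 - lam N(s) / (2 i k) + O(k^-2),      N(s) = int_0^oo |q (x, s)|^2 dx.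

   In the quotient the masses combine into N(t) - N(0), and the NLS equation in conservation form
   d_t |q|^2 = i d_x (conj q q_x - q conj q_x) turns this difference into the boundary integral
   - i int_0^t (conj g0 g1 - g0 conj g1). *)

section \<open>Integrals on a half-line against inverse-square decay\<close>

lemma divide_le_self_if_one_le:
  fixes a p :: real
  assumes "0 \<le> a" "1 \<le> p"
  shows "a / p \<le> a"
proof -
  have "a * 1 \<le> a * p" by (rule mult_left_mono[OF assms(2,1)])
  then show ?thesis using assms(2) by (simp add: pos_divide_le_eq)
qed

lemma divide_one_plus_le:
  fixes x C :: real
  assumes "0 \<le> x" "0 \<le> C"
  shows "C / (1 + x) \<le> C"
  using assms by (intro divide_le_self_if_one_le) auto

lemma divide_one_plus_square_le:
  fixes x C :: real
  assumes "0 \<le> x" "0 \<le> C"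
  shows "C / (1 + x)\<^sup>2 \<le> C"
  using assms by (intro divide_le_self_if_one_le) (auto simp: one_le_power)

lemma norm_mult_le_if_norm_le_one:
  fixes a b :: "'a::real_normed_algebra_1"
  assumes "norm a \<le> 1" "norm b \<le> B"
  shows "norm (a * b) \<le> B"
proof -
  have "norm (a * b) \<le> norm a * norm b" by (rule norm_mult_ineq)
  also have "\<dots> \<le> 1 * B" by (intro mult_mono assms) auto
  finally show ?thesis by simp
qed

lemma norm_mult_le_decay:
  fixes a b :: "'a::real_normed_algebra"
  assumes "norm a \<le> K / (1 + x)\<^sup>2" "norm b \<le> B"
  shows "norm (a * b) \<le> K * B / (1 + x)\<^sup>2"
proof -
  have "norm (a * b) \<le> norm a * norm b" by (rule norm_mult_ineq)
  also have "\<dots> \<le> K / (1 + x)\<^sup>2 * B"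
    by (rule mult_mono[OF assms]) (use assms in \<open>auto intro: order_trans[OF norm_ge_zero]\<close>)
  finally show ?thesis by simp
qed

lemma norm_add_le_decay:
  fixes a b :: "'a::real_normed_vector"
  assumes "norm a \<le> A / (1 + x)\<^sup>2" "norm b \<le> B / (1 + x)\<^sup>2"
  shows "norm (a + b) \<le> (A + B) / (1 + x)\<^sup>2"
  using norm_triangle_ineq[of a b] assms by (simp add: add_divide_distrib)

lemma norm_lam_cnj_mult_le:
  fixes a b :: complex
  assumes "\<bar>lam\<bar> \<le> 1" "norm a \<le> A" "norm b \<le> B"
  shows "norm (complex_of_real lam * cnj a * b) \<le> A * B"
proof -
  have "norm (complex_of_real lam * cnj a * b) = \<bar>lam\<bar> * (norm a * norm b)"
    by (simp add: norm_mult)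
  also have "\<dots> \<le> 1 * (A * B)"
    using assms by (intro mult_mono) (auto intro: order_trans[OF norm_ge_zero])
  finally show ?thesis by simp
qed

lemma has_integral_inverse_square:
  fixes a :: real
  assumes a: "0 \<le> a"
  shows "((\<lambda>x. 1 / (1 + x)\<^sup>2) has_integral 1 / (1 + a)) {a..}"
proof (rule has_integral_to_inf)
  show "(\<lambda>x. 1 / (1 + x)\<^sup>2) integrable_on {a..y}" for y
    using a by (intro integrable_continuous_interval continuous_intros) auto
  have "((\<lambda>x. 1 / (1 + x)\<^sup>2) has_integral ((- 1/(1+y)) - (-1/(1+a)))) {a..y}" if "y \<ge> a" for y
    using that a
    by (intro fundamental_theorem_of_calculus)
       (auto intro!: derivative_eq_intros simp: power2_eq_square divide_simps
             simp flip: has_real_derivative_iff_has_vector_derivative)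
  then have "integral {a..y} (\<lambda>x. 1 / (1 + x)\<^sup>2) = 1/(1+a) - 1/(1+y)" if "y \<ge> a" for y
    using that by (simp add: integral_unique)
  then have "\<forall>\<^sub>F y in at_top. integral {a..y} (\<lambda>x. 1 / (1 + x)\<^sup>2) = 1/(1+a) - 1/(1+y)"
    by (intro eventually_at_top_linorderI)
  moreover have "((\<lambda>y::real. 1/(1+a) - 1/(1+y)) \<longlongrightarrow> 1/(1+a)) at_top"
    by real_asymp
  ultimately show "((\<lambda>y. integral {a..y} (\<lambda>x. 1 / (1 + x)\<^sup>2)) \<longlongrightarrow> 1/(1+a)) at_top"
    by (simp add: filterlim_cong tendsto_cong)
qed (use a in auto)

lemma dominated_by_inverse_square:
  fixes f :: "real \<Rightarrow> 'b::euclidean_space"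
  assumes a: "0 \<le> a" and cont: "continuous_on {a..} f"
    and bd: "\<And>x. a \<le> x \<Longrightarrow> norm (f x) \<le> C / (1 + x)\<^sup>2"
  shows "f absolutely_integrable_on {a..}" "f integrable_on {a..}"
    "norm (integral {a..} f) \<le> C / (1 + a)"
proof -
  have gi: "((\<lambda>x. C / (1 + x)\<^sup>2) has_integral C / (1 + a)) {a..}"
    using has_integral_mult_right[OF has_integral_inverse_square[OF a], of C] by simp
  show ai: "f absolutely_integrable_on {a..}"
    by (rule measurable_bounded_by_integrable_imp_absolutely_integrable[where g="\<lambda>x. C / (1 + x)\<^sup>2"])
       (use gi bd cont in \<open>auto intro: continuous_imp_measurable_on_sets_lebesgue\<close>)
  then show fi: "f integrable_on {a..}" using set_lebesgue_integral_eq_integral(1) by blast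
  have "norm (integral {a..} f) \<le> integral {a..} (\<lambda>x. C / (1 + x)\<^sup>2)"
    by (rule integral_norm_bound_integral) (use fi gi bd in auto)
  then show "norm (integral {a..} f) \<le> C / (1 + a)" using gi by (simp add: integral_unique)
qed

lemma LIMSEQ_integral_atLeastAtMost:
  fixes f :: "real \<Rightarrow> complex"
  assumes ai: "f absolutely_integrable_on {a..}"
  shows "(\<lambda>n. integral {a..a + real n} f) \<longlonglongrightarrow> integral {a..} f"
proof -
  have fi: "f integrable_on {a..}" using ai set_lebesgue_integral_eq_integral(1) by blast
  have ni: "(\<lambda>x. norm (f x)) integrable_on {a..}" using ai absolutely_integrable_on_def by blast
  define g where "g n x = (if x \<in> {a..a + real n} then f x else 0)" for n x
  have gint: "(g n has_integral integral {a..a + real n} f) {a..}" for n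
    unfolding g_def
    by (subst has_integral_restrict) (auto intro!: integrable_integral integrable_on_subinterval[OF fi])
  have "(\<lambda>n. integral {a..} (g n)) \<longlonglongrightarrow> integral {a..} f"
  proof (rule dominated_convergence(2)[OF _ ni])
    show "g n integrable_on {a..}" for n using gint by blast
    show "norm (g n x) \<le> norm (f x)" if "x \<in> {a..}" for n x by (simp add: g_def)
    show "(\<lambda>n. g n x) \<longlonglongrightarrow> f x" if "x \<in> {a..}" for x
    proof (rule tendsto_eventually)
      obtain N :: nat where "real N \<ge> x - a" using real_arch_simple by blast
      then have "\<forall>n\<ge>N. g n x = f x" using that by (auto simp: g_def)
      then show "\<forall>\<^sub>F n in sequentially. g n x = f x" using eventually_sequentially by blast
    qed
  qed
  moreover have "integral {a..} (g n) = integral {a..a + real n} f" for n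
    using gint by (rule integral_unique)
  ultimately show ?thesis by simp
qed

lemma at_within_atLeast_eq_atLeastAtMost:
  fixes x :: real
  assumes "0 \<le> x"
  shows "at x within {0..x+1} = at x within {0..}"
  by (rule at_within_nhd[where S="{..<x+1}"]) auto

lemma integral_atLeast_split:
  fixes g :: "real \<Rightarrow> 'b::banach"
  assumes "g integrable_on {a..}" "g integrable_on {x..}" "a \<le> x"
  shows "integral {a..} g = integral {a..x} g + integral {x..} g"
proof -
  have "g integrable_on {a..x}" by (rule integrable_on_subinterval[OF assms(1)]) (use assms in auto)
  then have "(g has_integral (integral {a..x} g + integral {x..} g)) ({a..x} \<union> {x..})"
    by (intro has_integral_Un) (use assms in \<open>auto intro: negligible_subset[of "{x}"]\<close>)
  moreover have "{a..x} \<union> {x..} = {a..}" using assms by auto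
  ultimately show ?thesis by (simp add: integral_unique)
qed

lemma continuous_on_tail_integral:
  fixes g :: "real \<Rightarrow> 'b::banach"
  assumes "\<And>x. 0 \<le> x \<Longrightarrow> g integrable_on {x..}"
  shows "continuous_on {0..} (\<lambda>x. integral {x..} g)"
proof -
  have "continuous (at x within {0..}) (\<lambda>x. integral {0..} g - integral {0..x} g)" if "0 \<le> x" for x
  proof -
    have "continuous_on {0..x+1} (\<lambda>x. integral {0..x} g)"
      by (rule indefinite_integral_continuous_1, rule integrable_on_subinterval[OF assms[of 0]]) auto
    then have "continuous (at x within {0..x+1}) (\<lambda>x. integral {0..} g - integral {0..x} g)"
      using that by (intro continuous_intros) (simp add: continuous_on_eq_continuous_within)
    then show ?thesis using at_within_atLeast_eq_atLeastAtMost[OF that] by simp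
  qed
  then have "continuous_on {0..} (\<lambda>x. integral {0..} g - integral {0..x} g)"
    by (simp add: continuous_on_eq_continuous_within)
  moreover have "integral {0..} g - integral {0..x} g = integral {x..} g" if "x \<in> {0..}" for x
    using integral_atLeast_split[OF assms[of 0] assms[of x]] that by simp
  ultimately show ?thesis by (rule continuous_on_eq)
qed

lemma has_vector_derivative_tail_integral:
  fixes g :: "real \<Rightarrow> 'b::banach"
  assumes "\<And>x. 0 \<le> x \<Longrightarrow> g integrable_on {x..}" "continuous_on {0..} g" "0 \<le> x"
  shows "((\<lambda>x. integral {x..} g) has_vector_derivative - g x) (at x within {0..})"
proof -
  have "((\<lambda>y. integral {0..y} g) has_vector_derivative g x) (at x within {0..x+1})"
    by (rule integral_has_vector_derivative) (use assms in \<open>auto intro: continuous_on_subset\<close>)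
  then have d: "((\<lambda>y. integral {0..} g - integral {0..y} g) has_vector_derivative - g x) (at x within {0..})"
    using at_within_atLeast_eq_atLeastAtMost[OF assms(3)] by (auto intro!: derivative_eq_intros)
  have e: "integral {y..} g = integral {0..} g - integral {0..y} g" if "y \<in> {0..}" for y
    using integral_atLeast_split[OF assms(1)[of 0] assms(1)[of y]] that by simp
  show ?thesis by (rule has_vector_derivative_transform[OF _ e d]) (use assms(3) in simp)
qed

section \<open>Oscillatory integrals\<close>

lemma has_integral_atLeast_vanishing_antiderivative:
  fixes f g :: "real \<Rightarrow> complex"
  assumes der: "\<And>x. a \<le> x \<Longrightarrow> (f has_vector_derivative g x) (at x within {a..})"
    and dom: "\<And>x. a \<le> x \<Longrightarrow> norm (g x) \<le> w x" and w: "w integrable_on {a..}"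
    and lim: "(f \<longlongrightarrow> 0) at_top"
  shows "(g has_integral - f a) {a..}"
proof -
  define gn where "gn n x = (if x \<in> {a..a + real n} then g x else 0)" for n x
  have "(gn n has_integral (f (a + real n) - f a)) {a..}" for n
  proof -
    have "(g has_integral (f (a + real n) - f a)) {a..a + real n}"
      by (rule fundamental_theorem_of_calculus)
         (auto intro: has_vector_derivative_within_subset[OF der])
    then show ?thesis unfolding gn_def by (subst has_integral_restrict) auto
  qed
  moreover have "\<forall>x\<in>{a..}. norm (gn n x) \<le> w x" for n
    using dom by (auto simp: gn_def intro: order_trans[OF norm_ge_zero])
  moreover have "\<forall>x\<in>{a..}. (\<lambda>n. gn n x) \<longlonglongrightarrow> g x"
  proof
    fix x :: real assume "x \<in> {a..}"
    obtain N :: nat where "real N \<ge> x - a" using real_arch_simple by blast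
    then have "\<forall>n\<ge>N. gn n x = g x" using \<open>x \<in> {a..}\<close> by (auto simp: gn_def)
    then show "(\<lambda>n. gn n x) \<longlonglongrightarrow> g x"
      by (intro tendsto_eventually) (auto simp: eventually_sequentially)
  qed
  moreover have "(\<lambda>n. f (a + real n) - f a) \<longlonglongrightarrow> - f a"
  proof -
    have "filterlim (\<lambda>n::nat. a + real n) at_top sequentially" by real_asymp
    then have "(\<lambda>n. f (a + real n)) \<longlonglongrightarrow> 0" by (rule filterlim_compose[OF lim])
    then show ?thesis by (intro tendsto_eq_intros) auto
  qed
  ultimately show ?thesis by (rule has_integral_dominated_convergence[OF _ w])
qed

lemma has_vector_derivative_exp_affine:
  fixes c :: complex and a :: real
  shows "((\<lambda>x. exp (c * complex_of_real (x - a))) has_vector_derivative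
          (c * exp (c * complex_of_real (x - a)))) (at x within S)"
proof -
  have "((\<lambda>z. exp (c * (z - complex_of_real a))) has_field_derivative
          (exp (c * (complex_of_real x - complex_of_real a)) * c)) (at (complex_of_real x))"
    by (auto intro!: derivative_eq_intros)
  from has_vector_derivative_real_field[OF this, of S] show ?thesis
    by (simp add: mult.commute)
qed

lemma norm_exp_oscillation_le_1:
  fixes k :: complex and x a :: real
  assumes "0 \<le> Im k" "a \<le> x"
  shows "norm (exp (2 * \<i> * k * complex_of_real (x - a))) \<le> 1"
proof -
  have "Re (2 * \<i> * k * complex_of_real (x - a)) = - 2 * Im k * (x - a)" by simp
  also have "\<dots> \<le> 0" using assms by (simp add: mult_nonneg_nonneg)
  finally show ?thesis by simp
qed

lemma oscillatory_integral_by_parts: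
  fixes h h' :: "real \<Rightarrow> complex" and k :: complex
  assumes a: "0 \<le> a" and k: "0 \<le> Im k" "k \<noteq> 0"
    and der: "\<And>x. a \<le> x \<Longrightarrow> (h has_vector_derivative h' x) (at x within {a..})"
    and cont': "continuous_on {a..} h'"
    and bh: "\<And>x. a \<le> x \<Longrightarrow> norm (h x) \<le> C / (1 + x)\<^sup>2"
    and bh': "\<And>x. a \<le> x \<Longrightarrow> norm (h' x) \<le> C' / (1 + x)\<^sup>2"
  shows "((\<lambda>x. exp (2 * \<i> * k * complex_of_real (x - a)) * h x) has_integral
           (- h a / (2 * \<i> * k) - integral {a..} (\<lambda>x. exp (2 * \<i> * k * complex_of_real (x - a)) * h' x) / (2 * \<i> * k))) {a..}"
proof -
  define c where "c = 2 * \<i> * k"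
  have c0: "c \<noteq> 0" using k by (simp add: c_def)
  define E where "E x = exp (c * complex_of_real (x - a))" for x
  have E1: "norm (E x) \<le> 1" if "a \<le> x" for x
    using norm_exp_oscillation_le_1[OF k(1) that] by (simp add: E_def c_def)
  have Eh'_int: "(\<lambda>x. E x * h' x) integrable_on {a..}"
    using E1 bh' by (intro dominated_by_inverse_square(2)[OF a, of _ C'] norm_mult_le_if_norm_le_one)
       (auto simp: E_def intro!: continuous_intros cont')
  define g where "g x = E x * h x + E x * h' x / c" for x
  have "(g has_integral - (E a * h a / c)) {a..}"
  proof (rule has_integral_atLeast_vanishing_antiderivative)
    show "((\<lambda>x. E x * h x / c) has_vector_derivative g x) (at x within {a..})" if "a \<le> x" for x
      unfolding g_def E_def using der[OF that] has_vector_derivative_exp_affine[of c a x "{a..}"]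
      by (auto intro!: derivative_eq_intros simp: c0 field_simps)
    show "norm (g x) \<le> C / (1 + x)\<^sup>2 + C' / (1 + x)\<^sup>2 / norm c" if "a \<le> x" for x
    proof -
      have "norm (g x) \<le> norm (E x * h x) + norm (E x * h' x) / norm c"
        unfolding g_def by (metis norm_divide norm_triangle_ineq)
      also have "\<dots> \<le> C / (1 + x)\<^sup>2 + C' / (1 + x)\<^sup>2 / norm c"
        using that by (intro add_mono divide_right_mono norm_mult_le_if_norm_le_one E1 bh bh') auto
      finally show ?thesis .
    qed
    show "(\<lambda>x. C / (1 + x)\<^sup>2 + C' / (1 + x)\<^sup>2 / norm c) integrable_on {a..}"
      using has_integral_add[OF has_integral_mult_right[OF has_integral_inverse_square[OF a], of C]
          has_integral_mult_right[OF has_integral_inverse_square[OF a], of "C' / norm c"]]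
      by (auto simp: integrable_on_def mult.commute)
    have "((\<lambda>x::real. 1 / (1 + x)\<^sup>2) \<longlongrightarrow> 0) at_top" by real_asymp
    from tendsto_mult_left[OF this, of "C / norm c"]
    have "((\<lambda>x. C / (1 + x)\<^sup>2 / norm c) \<longlongrightarrow> 0) at_top" by (simp add: ac_simps)
    moreover have "norm (E x * h x / c) \<le> C / (1 + x)\<^sup>2 / norm c" if "a \<le> x" for x
      unfolding norm_divide using that E1 bh by (intro divide_right_mono norm_mult_le_if_norm_le_one) auto
    then have "\<forall>\<^sub>F x in at_top. norm (E x * h x / c) \<le> C / (1 + x)\<^sup>2 / norm c"
      by (rule eventually_mono[OF eventually_ge_at_top[of a]])
    ultimately show "((\<lambda>x. E x * h x / c) \<longlongrightarrow> 0) at_top"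
      by (rule Lim_null_comparison[rotated])
  qed
  then have "((\<lambda>x. g x - E x * h' x / c) has_integral (- (E a * h a / c) - integral {a..} (\<lambda>x. E x * h' x) / c)) {a..}"
    by (intro has_integral_diff has_integral_divide integrable_integral Eh'_int)
  then show ?thesis by (simp add: g_def E_def c_def)
qed

lemma oscillatory_integral_by_parts_remainder:
  fixes h h' :: "real \<Rightarrow> complex" and k :: complex
  assumes a: "0 \<le> a" and k: "0 \<le> Im k" "k \<noteq> 0"
    and der: "\<And>x. a \<le> x \<Longrightarrow> (h has_vector_derivative h' x) (at x within {a..})"
    and cont': "continuous_on {a..} h'"
    and bh: "\<And>x. a \<le> x \<Longrightarrow> norm (h x) \<le> C / (1 + x)\<^sup>2"
    and bh': "\<And>x. a \<le> x \<Longrightarrow> norm (h' x) \<le> C' / (1 + x)\<^sup>2"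
  shows "norm (integral {a..} (\<lambda>x. exp (2 * \<i> * k * complex_of_real (x - a)) * h x) + h a / (2 * \<i> * k))
       \<le> C' / (2 * norm k)"
proof -
  define E where "E x = exp (2 * \<i> * k * complex_of_real (x - a))" for x
  have "0 \<le> C' / (1 + a)\<^sup>2" using bh'[of a] norm_ge_zero[of "h' a"] by linarith
  then have C'0: "0 \<le> C'" using a by (simp add: zero_le_divide_iff)
  have "norm (integral {a..} (\<lambda>x. E x * h' x)) \<le> C' / (1 + a)"
    using a bh' norm_exp_oscillation_le_1[OF k(1)]
    by (intro dominated_by_inverse_square(3) norm_mult_le_if_norm_le_one)
       (auto simp: E_def intro!: continuous_intros cont')
  also have "\<dots> \<le> C'" using a C'0 by (rule divide_one_plus_le)
  finally have bound: "norm (integral {a..} (\<lambda>x. E x * h' x)) \<le> C'" .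
  have "integral {a..} (\<lambda>x. E x * h x) + h a / (2 * \<i> * k)
      = - integral {a..} (\<lambda>x. E x * h' x) / (2 * \<i> * k)"
    using integral_unique[OF oscillatory_integral_by_parts[OF a k der cont' bh bh']] by (simp add: E_def)
  then have "norm (integral {a..} (\<lambda>x. E x * h x) + h a / (2 * \<i> * k))
      = norm (integral {a..} (\<lambda>x. E x * h' x)) / (2 * norm k)"
    by (simp add: norm_divide norm_mult)
  also have "\<dots> \<le> C' / (2 * norm k)" using bound by (rule divide_right_mono) simp
  finally show ?thesis unfolding E_def .
qed

lemma norm_oscillatory_integral_le:
  fixes h h' :: "real \<Rightarrow> complex" and k :: complex
  assumes a: "0 \<le> a" and k: "0 \<le> Im k" "k \<noteq> 0"
    and der: "\<And>x. a \<le> x \<Longrightarrow> (h has_vector_derivative h' x) (at x within {a..})"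
    and cont': "continuous_on {a..} h'"
    and bh: "\<And>x. a \<le> x \<Longrightarrow> norm (h x) \<le> C / (1 + x)\<^sup>2"
    and bh': "\<And>x. a \<le> x \<Longrightarrow> norm (h' x) \<le> C / (1 + x)\<^sup>2"
  shows "norm (integral {a..} (\<lambda>x. exp (2 * \<i> * k * complex_of_real (x - a)) * h x)) \<le> C / norm k"
proof -
  have "0 \<le> C / (1 + a)\<^sup>2" using bh[of a] norm_ge_zero[of "h a"] by linarith
  then have "norm (h a) \<le> C"
    using bh[of a] a divide_one_plus_square_le[OF a, of C] by (simp add: zero_le_divide_iff)
  then have "norm (h a / (2 * \<i> * k)) \<le> C / (2 * norm k)"
    by (simp add: norm_divide norm_mult divide_right_mono)
  moreover note oscillatory_integral_by_parts_remainder[OF a k der cont' bh bh']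
  ultimately show ?thesis
    using norm_triangle_ineq4[of "integral {a..} (\<lambda>x. exp (2 * \<i> * k * complex_of_real (x - a)) * h x) + h a / (2 * \<i> * k)"
        "h a / (2 * \<i> * k)"]
    by simp
qed

section \<open>A Gronwall inequality for tail integrals\<close>

lemma has_integral_gronwall_weight:
  fixes K x :: real
  assumes K: "0 \<le> K" and x: "0 \<le> x"
  shows "((\<lambda>y. K / (1 + y)\<^sup>2 * exp (2 * K / (1 + y))) has_integral (exp (2 * K / (1 + x)) - 1) / 2) {x..}"
proof (rule has_integral_to_inf)
  show "(\<lambda>y. K / (1 + y)\<^sup>2 * exp (2 * K / (1 + y))) integrable_on {x..z}" for z
    using x by (intro integrable_continuous_interval continuous_intros) auto
  have "((\<lambda>y. K / (1 + y)\<^sup>2 * exp (2 * K / (1 + y))) has_integral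
          ((- exp (2 * K / (1 + z)) / 2) - (- exp (2 * K / (1 + x)) / 2))) {x..z}" if "z \<ge> x" for z
    using that x
    by (intro fundamental_theorem_of_calculus)
       (auto intro!: derivative_eq_intros simp: power2_eq_square divide_simps
             simp flip: has_real_derivative_iff_has_vector_derivative)
  then have "integral {x..z} (\<lambda>y. K / (1 + y)\<^sup>2 * exp (2 * K / (1 + y))) =
      (exp (2 * K / (1 + x)) - exp (2 * K / (1 + z))) / 2" if "z \<ge> x" for z
    using that by (simp add: integral_unique diff_divide_distrib)
  then have ev: "\<forall>\<^sub>F z in at_top. (exp (2 * K / (1 + x)) - exp (2 * K / (1 + z))) / 2 =
      integral {x..z} (\<lambda>y. K / (1 + y)\<^sup>2 * exp (2 * K / (1 + y)))"
    by (intro eventually_at_top_linorderI) (rule sym)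
  have "((\<lambda>z::real. (exp (2 * K / (1 + x)) - exp (2 * K / (1 + z))) / 2) \<longlongrightarrow>
       (exp (2 * K / (1 + x)) - 1) / 2) at_top"
    by real_asymp
  then show "((\<lambda>z. integral {x..z} (\<lambda>y. K / (1 + y)\<^sup>2 * exp (2 * K / (1 + y)))) \<longlongrightarrow>
       (exp (2 * K / (1 + x)) - 1) / 2) at_top"
    by (rule Lim_transform_eventually[OF _ ev])
qed (use K x in auto)

lemma tail_integral_le_gronwall_weight:
  fixes \<mu> :: "real \<Rightarrow> real"
  assumes K: "0 \<le> K" and cont: "continuous_on {0..} \<mu>"
    and nonneg: "\<And>y. 0 \<le> y \<Longrightarrow> 0 \<le> \<mu> y" and bounded: "\<And>y. 0 \<le> y \<Longrightarrow> \<mu> y \<le> B"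
    and up: "\<And>y. 0 \<le> y \<Longrightarrow> \<mu> y \<le> S * exp (2 * K / (1 + y))"
    and y: "0 \<le> y"
  shows "integral {y..} (\<lambda>\<xi>. K / (1 + \<xi>)\<^sup>2 * \<mu> \<xi>) \<le> S * ((exp (2 * K / (1 + y)) - 1) / 2)"
proof -
  have weight: "((\<lambda>\<xi>. S * (K / (1 + \<xi>)\<^sup>2 * exp (2 * K / (1 + \<xi>)))) has_integral
      S * ((exp (2 * K / (1 + y)) - 1) / 2)) {y..}"
    using has_integral_mult_right[OF has_integral_gronwall_weight[OF K y], of S] .
  have "integral {y..} (\<lambda>\<xi>. K / (1 + \<xi>)\<^sup>2 * \<mu> \<xi>)
      \<le> integral {y..} (\<lambda>\<xi>. S * (K / (1 + \<xi>)\<^sup>2 * exp (2 * K / (1 + \<xi>))))"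
  proof (rule integral_le)
    show "(\<lambda>\<xi>. K / (1 + \<xi>)\<^sup>2 * \<mu> \<xi>) integrable_on {y..}"
    proof (rule dominated_by_inverse_square(2)[where C="K * B", OF y])
      show "continuous_on {y..} (\<lambda>\<xi>. K / (1 + \<xi>)\<^sup>2 * \<mu> \<xi>)"
        using y by (intro continuous_intros continuous_on_subset[OF cont]) auto
      fix \<xi> assume "y \<le> \<xi>"
      then show "norm (K / (1 + \<xi>)\<^sup>2 * \<mu> \<xi>) \<le> K * B / (1 + \<xi>)\<^sup>2"
        using y bounded[of \<xi>] nonneg[of \<xi>] K by (simp add: abs_mult mult_left_mono divide_right_mono)
    qed
    show "(\<lambda>\<xi>. S * (K / (1 + \<xi>)\<^sup>2 * exp (2 * K / (1 + \<xi>)))) integrable_on {y..}"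
      using weight by (rule has_integral_integrable)
    fix \<xi> assume "\<xi> \<in> {y..}"
    then have "K / (1 + \<xi>)\<^sup>2 * \<mu> \<xi> \<le> K / (1 + \<xi>)\<^sup>2 * (S * exp (2 * K / (1 + \<xi>)))"
      using y K by (intro mult_left_mono up) auto
    then show "K / (1 + \<xi>)\<^sup>2 * \<mu> \<xi> \<le> S * (K / (1 + \<xi>)\<^sup>2 * exp (2 * K / (1 + \<xi>)))"
      by (simp add: algebra_simps)
  qed
  also have "\<dots> = S * ((exp (2 * K / (1 + y)) - 1) / 2)"
    using weight by (rule integral_unique)
  finally show ?thesis .
qed

(* With psi y = exp (2 K / (1 + y)), the supremum S of mu / psi satisfies S \<le> max 1 (S / 2),
   hence S \<le> 2; boundedness of mu is only needed to make S finite. *)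

lemma gronwall_tail_integral:
  fixes \<mu> :: "real \<Rightarrow> real"
  assumes K: "0 \<le> K" and cont: "continuous_on {0..} \<mu>"
    and nonneg: "\<And>y. 0 \<le> y \<Longrightarrow> 0 \<le> \<mu> y" and bounded: "\<And>y. 0 \<le> y \<Longrightarrow> \<mu> y \<le> B"
    and ineq: "\<And>y. 0 \<le> y \<Longrightarrow> \<mu> y \<le> 1 + integral {y..} (\<lambda>\<xi>. K / (1 + \<xi>)\<^sup>2 * \<mu> \<xi>)"
    and x: "0 \<le> x"
  shows "\<mu> x \<le> 2 * exp (2 * K)"
proof -
  define \<psi> where "\<psi> y = exp (2 * K / (1 + y))" for y
  have \<psi>1: "1 \<le> \<psi> y" if "0 \<le> y" for y unfolding \<psi>_def using K that by simp
  define S where "S = (SUP y\<in>{0..}. \<mu> y / \<psi> y)"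
  have bdd: "bdd_above ((\<lambda>y. \<mu> y / \<psi> y) ` {0..})"
  proof (rule bdd_aboveI2)
    fix y :: real assume "y \<in> {0..}"
    then have "\<mu> y / \<psi> y \<le> \<mu> y" using \<psi>1 nonneg divide_le_self_if_one_le by simp
    also have "\<dots> \<le> B" using \<open>y \<in> {0..}\<close> bounded by simp
    finally show "\<mu> y / \<psi> y \<le> B" .
  qed
  have up: "\<mu> y \<le> S * \<psi> y" if y: "0 \<le> y" for y
  proof -
    have "\<mu> y / \<psi> y \<le> S" unfolding S_def by (rule cSUP_upper[OF _ bdd]) (use y in simp)
    then show ?thesis using \<psi>1[OF y] by (simp add: divide_le_eq)
  qed
  have "\<mu> y / \<psi> y \<le> max 1 (S / 2)" if y: "0 \<le> y" for y
  proof -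
    have "\<mu> y \<le> 1 + S * ((\<psi> y - 1) / 2)"
      using ineq[OF y] tail_integral_le_gronwall_weight[OF K cont nonneg bounded _ y, of S] up
      unfolding \<psi>_def by fastforce
    then have "\<mu> y / \<psi> y \<le> (1 + S * ((\<psi> y - 1) / 2)) / \<psi> y"
      using \<psi>1[OF y] by (simp add: divide_right_mono)
    also have "\<dots> = S / 2 + (1 - S / 2) / \<psi> y"
      using \<psi>1[OF y] by (simp add: field_simps)
    also have "\<dots> \<le> max 1 (S / 2)"
    proof (cases "S \<le> 2")
      case True
      then have "(1 - S / 2) / \<psi> y \<le> 1 - S / 2"
        using \<psi>1[OF y] divide_le_self_if_one_le[of "1 - S / 2" "\<psi> y"] by simp
      then show ?thesis by simp
    next
      case False
      then have "(1 - S / 2) / \<psi> y \<le> 0"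
        using \<psi>1[OF y] by (simp add: divide_le_0_iff)
      then show ?thesis by simp
    qed
    finally show ?thesis .
  qed
  then have "S \<le> max 1 (S / 2)" unfolding S_def by (intro cSUP_least) auto
  then have "S \<le> 2" by (simp add: max_def split: if_splits)
  moreover have "\<psi> x \<le> exp (2 * K)"
    unfolding \<psi>_def using K x divide_one_plus_le[of x "2 * K"] by simp
  ultimately have "S * \<psi> x \<le> 2 * exp (2 * K)"
    using \<psi>1[OF x] by (intro mult_mono) auto
  then show ?thesis using up[OF x] by linarith
qed

section \<open>The Volterra equations for the second column of mu_3\<close>

lemma continuous_on_if_has_vector_derivative:
  assumes "\<And>x. 0 \<le> x \<Longrightarrow> (f has_vector_derivative f' x) (at x within {0..})"
  shows "continuous_on {0..} f"
  using assms by (meson atLeast_iff continuous_on_eq_continuous_within has_vector_derivative_continuous)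

definition mass :: "(real \<Rightarrow> complex) \<Rightarrow> complex" where
  "mass u = integral {0..} (\<lambda>\<xi>. cnj (u \<xi>) * u \<xi>)"

locale zs_potential =
  fixes u u1 u2 u3 :: "real \<Rightarrow> complex" and K lam :: real
  assumes has_derivative_u: "\<And>x. 0 \<le> x \<Longrightarrow> (u has_vector_derivative u1 x) (at x within {0..})"
    and has_derivative_u1: "\<And>x. 0 \<le> x \<Longrightarrow> (u1 has_vector_derivative u2 x) (at x within {0..})"
    and has_derivative_u2: "\<And>x. 0 \<le> x \<Longrightarrow> (u2 has_vector_derivative u3 x) (at x within {0..})"
    and continuous_u3: "continuous_on {0..} u3"
    and decay_u: "\<And>x. 0 \<le> x \<Longrightarrow> norm (u x) \<le> K / (1 + x)\<^sup>2"
    and decay_u1: "\<And>x. 0 \<le> x \<Longrightarrow> norm (u1 x) \<le> K / (1 + x)\<^sup>2"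
    and decay_u2: "\<And>x. 0 \<le> x \<Longrightarrow> norm (u2 x) \<le> K / (1 + x)\<^sup>2"
    and decay_u3: "\<And>x. 0 \<le> x \<Longrightarrow> norm (u3 x) \<le> K / (1 + x)\<^sup>2"
    and abs_lam: "\<bar>lam\<bar> \<le> 1"
begin

lemma K_nonneg: "0 \<le> K"
  using order_trans[OF norm_ge_zero decay_u[of 0]] by simp

lemma continuous_u: "continuous_on {0..} u"
  and continuous_u1: "continuous_on {0..} u1"
  and continuous_u2: "continuous_on {0..} u2"
  using has_derivative_u has_derivative_u1 has_derivative_u2
  by (blast intro: continuous_on_if_has_vector_derivative)+

lemma norm_u_le: "0 \<le> x \<Longrightarrow> norm (u x) \<le> K"
  and norm_u1_le: "0 \<le> x \<Longrightarrow> norm (u1 x) \<le> K"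
  using decay_u decay_u1 divide_one_plus_square_le[OF _ K_nonneg] by (blast intro: order_trans)+

definition jost_bound :: real where "jost_bound = 2 * exp (2 * K)"

lemma integrable_mass: "(\<lambda>\<xi>. cnj (u \<xi>) * u \<xi>) integrable_on {0..}"
  by (rule dominated_by_inverse_square(2)[where C="K * K"])
     (auto intro!: continuous_intros continuous_u norm_mult_le_decay norm_u_le simp: decay_u)

(* Explicit constants depending only on K, so that all bounds below are uniform in k and in the
   time slice. *)
definition "C1 = K * jost_bound + K * (K * jost_bound)"
definition "C2 = (K * jost_bound + C1) / 2"
definition "C3 = K + 2 * K * K * C2"
definition "C4 = (C3 + K * K * C2) / 2"
definition "C5 = 2 * K * K * C2"
definition "C6 = 4 * K * K * C2 + K * K * C3"
definition "C_m1 = K / 4 + K * K * C4 / 2 + (C5 + C6) / 4"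
definition "C_m2 = K * C4"

lemma constants_nonneg: "0 \<le> C1" "0 \<le> C2" "0 \<le> C3" "0 \<le> C4" "0 \<le> C5" "0 \<le> C6" "0 \<le> C_m1" "0 \<le> C_m2"
  using K_nonneg by (auto simp: jost_bound_def C1_def C2_def C3_def C4_def C5_def C6_def C_m1_def C_m2_def)

end

(* m1 and m2 stand for the components M12 and M22 of mu_3 at a fixed time whose potential is u. *)
locale zs_jost = zs_potential +
  fixes k :: complex and m1 m2 :: "real \<Rightarrow> complex" and B :: real
  assumes k: "0 \<le> Im k" "1 \<le> norm k"
    and volterra1: "\<And>x. 0 \<le> x \<Longrightarrow> ((\<lambda>\<xi>. exp (2 * \<i> * k * complex_of_real (\<xi> - x)) * u \<xi> * m2 \<xi>)
                 has_integral - m1 x) {x..}"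
    and volterra2: "\<And>x. 0 \<le> x \<Longrightarrow> ((\<lambda>\<xi>. complex_of_real lam * cnj (u \<xi>) * m1 \<xi>)
                 has_integral (1 - m2 x)) {x..}"
    and bounded: "\<And>x. 0 \<le> x \<Longrightarrow> norm (m1 x) \<le> B \<and> norm (m2 x) \<le> B"
begin

lemma k_nonzero: "k \<noteq> 0" using k by auto

lemma norm_k_pos: "0 < norm k" using k by linarith

(* Multiplying the first equation by exp (2 i k x) makes the integrand independent of x, so m1 and m2
   are expressed through tail integrals of fixed functions. *)

definition integrand1 :: "real \<Rightarrow> complex" where
  "integrand1 \<xi> = exp (2 * \<i> * k * complex_of_real \<xi>) * u \<xi> * m2 \<xi>"

definition integrand2 :: "real \<Rightarrow> complex" where
  "integrand2 \<xi> = complex_of_real lam * cnj (u \<xi>) * m1 \<xi>"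

lemma has_integral_integrand1:
  assumes x: "0 \<le> x"
  shows "(integrand1 has_integral (- exp (2 * \<i> * k * complex_of_real x) * m1 x)) {x..}"
proof -
  have shift: "exp (2 * \<i> * k * complex_of_real x) * exp (2 * \<i> * k * complex_of_real (\<xi> - x))
      = exp (2 * \<i> * k * complex_of_real \<xi>)" for \<xi>
  proof -
    have "2 * \<i> * k * complex_of_real x + 2 * \<i> * k * complex_of_real (\<xi> - x) = 2 * \<i> * k * complex_of_real \<xi>"
      by (simp add: algebra_simps)
    then show ?thesis by (metis mult_exp_exp)
  qed
  have "(\<lambda>\<xi>. exp (2 * \<i> * k * complex_of_real x) * (exp (2 * \<i> * k * complex_of_real (\<xi> - x)) * u \<xi> * m2 \<xi>))
      = integrand1"
    by (rule ext) (simp only: integrand1_def mult.assoc[symmetric] shift)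
  with has_integral_mult_right[OF volterra1[OF x], of "exp (2 * \<i> * k * complex_of_real x)"]
  show ?thesis by simp
qed

lemma m1_eq:
  assumes x: "0 \<le> x"
  shows "m1 x = - exp (- 2 * \<i> * k * complex_of_real x) * integral {x..} integrand1"
proof -
  have "- exp (- 2 * \<i> * k * complex_of_real x) * integral {x..} integrand1
      = (exp (- (2 * \<i> * k * complex_of_real x)) * exp (2 * \<i> * k * complex_of_real x)) * m1 x"
    using integral_unique[OF has_integral_integrand1[OF x]] by simp
  then show ?thesis by (simp add: exp_minus_inverse mult.commute)
qed

lemma m2_eq: "0 \<le> x \<Longrightarrow> m2 x = 1 - integral {x..} integrand2"
  using integral_unique[OF volterra2] unfolding integrand2_def by simp

lemma integrable_integrand1: "0 \<le> x \<Longrightarrow> integrand1 integrable_on {x..}"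
  using has_integral_integrand1 by blast

lemma integrable_integrand2: "0 \<le> x \<Longrightarrow> integrand2 integrable_on {x..}"
  using volterra2 unfolding integrand2_def by blast

lemma continuous_m1: "continuous_on {0..} m1"
proof -
  have "continuous_on {0..} (\<lambda>x. - exp (- 2 * \<i> * k * complex_of_real x) * integral {x..} integrand1)"
    by (intro continuous_intros continuous_on_tail_integral integrable_integrand1) auto
  then show ?thesis by (rule continuous_on_eq) (simp add: m1_eq)
qed

lemma continuous_m2: "continuous_on {0..} m2"
proof -
  have "continuous_on {0..} (\<lambda>x. 1 - integral {x..} integrand2)"
    by (intro continuous_intros continuous_on_tail_integral integrable_integrand2) auto
  then show ?thesis by (rule continuous_on_eq) (simp add: m2_eq)
qed

lemma has_derivative_m2:
  assumes x: "0 \<le> x"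
  shows "(m2 has_vector_derivative (complex_of_real lam * cnj (u x) * m1 x)) (at x within {0..})"
proof -
  have "continuous_on {0..} integrand2"
    unfolding integrand2_def by (intro continuous_intros continuous_u continuous_m1)
  then have "((\<lambda>x. 1 - integral {x..} integrand2) has_vector_derivative 0 - (- integrand2 x)) (at x within {0..})"
    by (intro has_vector_derivative_diff has_vector_derivative_const
        has_vector_derivative_tail_integral integrable_integrand2 x)
  then have d: "((\<lambda>x. 1 - integral {x..} integrand2) has_vector_derivative
      (complex_of_real lam * cnj (u x) * m1 x)) (at x within {0..})"
    by (simp add: integrand2_def)
  have e: "m2 y = 1 - integral {y..} integrand2" if "y \<in> {0..}" for y using m2_eq that by simp
  show ?thesis by (rule has_vector_derivative_transform[OF _ e d]) (use x in simp)
qed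

lemma has_derivative_m1:
  assumes x: "0 \<le> x"
  shows "(m1 has_vector_derivative (- 2 * \<i> * k * m1 x + u x * m2 x)) (at x within {0..})"
proof -
  define c where "c = - 2 * \<i> * k"
  define E where "E y = exp (c * complex_of_real y)" for y
  have "continuous_on {0..} integrand1"
    unfolding integrand1_def by (intro continuous_intros continuous_u continuous_m2)
  from has_vector_derivative_tail_integral[OF integrable_integrand1 this x]
  have "((\<lambda>y. integral {y..} integrand1) has_vector_derivative - integrand1 x) (at x within {0..})" .
  from has_vector_derivative_minus[OF has_vector_derivative_mult[OF _ this]]
  have d: "((\<lambda>y. - (E y * integral {y..} integrand1)) has_vector_derivative
      - (E x * - integrand1 x + c * E x * integral {x..} integrand1)) (at x within {0..})"
    using has_vector_derivative_exp_affine[of c 0 x "{0..}"] by (simp add: E_def)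
  have inverse: "E x * exp (2 * \<i> * k * complex_of_real x) = 1"
    using exp_minus_inverse[of "2 * \<i> * k * complex_of_real x"] by (simp add: E_def c_def mult.commute)
  have "- (E x * - integrand1 x + c * E x * integral {x..} integrand1)
      = (E x * exp (2 * \<i> * k * complex_of_real x)) * (u x * m2 x)
        + c * (E x * exp (2 * \<i> * k * complex_of_real x)) * m1 x"
    unfolding integral_unique[OF has_integral_integrand1[OF x]] integrand1_def by (simp add: algebra_simps)
  also have "\<dots> = - 2 * \<i> * k * m1 x + u x * m2 x" unfolding inverse by (simp add: c_def)
  finally have "- (E x * - integrand1 x + c * E x * integral {x..} integrand1) = - 2 * \<i> * k * m1 x + u x * m2 x" .
  moreover have e: "m1 y = - (E y * integral {y..} integrand1)" if "y \<in> {0..}" for y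
    using m1_eq that by (simp add: E_def c_def)
  ultimately show ?thesis using has_vector_derivative_transform[OF _ e d] x by simp
qed

lemma integrable_norm_u_m1: "0 \<le> x \<Longrightarrow> (\<lambda>\<xi>. norm (u \<xi>) * norm (m1 \<xi>)) integrable_on {x..}"
  and integrable_norm_u_m2: "0 \<le> x \<Longrightarrow> (\<lambda>\<xi>. norm (u \<xi>) * norm (m2 \<xi>)) integrable_on {x..}"
  by (intro dominated_by_inverse_square(2)[where C="K * B"];
      auto intro!: continuous_intros continuous_on_subset[OF continuous_u] continuous_on_subset[OF continuous_m1]
        continuous_on_subset[OF continuous_m2] simp: norm_mult[symmetric] norm_mult_le_decay decay_u bounded)+

lemma norm_m1_le_integral:
  assumes x: "0 \<le> x"
  shows "norm (m1 x) \<le> integral {x..} (\<lambda>\<xi>. norm (u \<xi>) * norm (m2 \<xi>))"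
proof -
  have "norm (integral {x..} (\<lambda>\<xi>. exp (2 * \<i> * k * complex_of_real (\<xi> - x)) * u \<xi> * m2 \<xi>))
      \<le> integral {x..} (\<lambda>\<xi>. norm (u \<xi>) * norm (m2 \<xi>))"
  proof (rule integral_norm_bound_integral)
    show "(\<lambda>\<xi>. exp (2 * \<i> * k * complex_of_real (\<xi> - x)) * u \<xi> * m2 \<xi>) integrable_on {x..}"
      using volterra1[OF x] by blast
    show "(\<lambda>\<xi>. norm (u \<xi>) * norm (m2 \<xi>)) integrable_on {x..}"
      using x by (rule integrable_norm_u_m2)
    fix \<xi> assume "\<xi> \<in> {x..}"
    then have "norm (exp (2 * \<i> * k * complex_of_real (\<xi> - x)) * (u \<xi> * m2 \<xi>)) \<le> norm (u \<xi> * m2 \<xi>)"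
      by (intro norm_mult_le_if_norm_le_one[OF norm_exp_oscillation_le_1[OF k(1)] order_refl]) auto
    then show "norm (exp (2 * \<i> * k * complex_of_real (\<xi> - x)) * u \<xi> * m2 \<xi>) \<le> norm (u \<xi>) * norm (m2 \<xi>)"
      by (simp add: mult.assoc norm_mult)
  qed
  then show ?thesis using integral_unique[OF volterra1[OF x]] by simp
qed

lemma norm_m2_le_integral:
  assumes x: "0 \<le> x"
  shows "norm (m2 x) \<le> 1 + integral {x..} (\<lambda>\<xi>. norm (u \<xi>) * norm (m1 \<xi>))"
proof -
  have "norm (integral {x..} (\<lambda>\<xi>. complex_of_real lam * cnj (u \<xi>) * m1 \<xi>))
      \<le> integral {x..} (\<lambda>\<xi>. norm (u \<xi>) * norm (m1 \<xi>))"
  proof (rule integral_norm_bound_integral)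
    show "(\<lambda>\<xi>. complex_of_real lam * cnj (u \<xi>) * m1 \<xi>) integrable_on {x..}"
      using volterra2[OF x] by blast
    show "(\<lambda>\<xi>. norm (u \<xi>) * norm (m1 \<xi>)) integrable_on {x..}"
      using x by (rule integrable_norm_u_m1)
  qed (rule norm_lam_cnj_mult_le[OF abs_lam order_refl order_refl])
  moreover have "m2 x = 1 - integral {x..} (\<lambda>\<xi>. complex_of_real lam * cnj (u \<xi>) * m1 \<xi>)"
    using integral_unique[OF volterra2[OF x]] by simp
  ultimately show ?thesis by (metis add_le_cancel_left norm_one norm_triangle_ineq4 order_trans)
qed

lemma jost_norm_inequality:
  assumes x: "0 \<le> x"
  shows "norm (m1 x) + norm (m2 x) \<le> 1 + integral {x..} (\<lambda>\<xi>. K / (1 + \<xi>)\<^sup>2 * (norm (m1 \<xi>) + norm (m2 \<xi>)))"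
proof -
  have "norm (m1 x) + norm (m2 x)
      \<le> 1 + (integral {x..} (\<lambda>\<xi>. norm (u \<xi>) * norm (m2 \<xi>)) + integral {x..} (\<lambda>\<xi>. norm (u \<xi>) * norm (m1 \<xi>)))"
    using norm_m1_le_integral[OF x] norm_m2_le_integral[OF x] by simp
  also have "\<dots> = 1 + integral {x..} (\<lambda>\<xi>. norm (u \<xi>) * (norm (m1 \<xi>) + norm (m2 \<xi>)))"
    using integral_add[OF integrable_norm_u_m2[OF x] integrable_norm_u_m1[OF x]] by (simp add: algebra_simps)
  also have "\<dots> \<le> 1 + integral {x..} (\<lambda>\<xi>. K / (1 + \<xi>)\<^sup>2 * (norm (m1 \<xi>) + norm (m2 \<xi>)))"
  proof (intro add_left_mono integral_le)
    show "(\<lambda>\<xi>. norm (u \<xi>) * (norm (m1 \<xi>) + norm (m2 \<xi>))) integrable_on {x..}"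
      using integrable_add[OF integrable_norm_u_m1[OF x] integrable_norm_u_m2[OF x]] by (simp add: algebra_simps)
    show "(\<lambda>\<xi>. K / (1 + \<xi>)\<^sup>2 * (norm (m1 \<xi>) + norm (m2 \<xi>))) integrable_on {x..}"
    proof (rule dominated_by_inverse_square(2)[where C="K * (2 * B)", OF x])
      show "continuous_on {x..} (\<lambda>\<xi>. K / (1 + \<xi>)\<^sup>2 * (norm (m1 \<xi>) + norm (m2 \<xi>)))"
        using x by (intro continuous_intros continuous_on_subset[OF continuous_m1]
            continuous_on_subset[OF continuous_m2]) auto
      fix \<xi> assume "x \<le> \<xi>"
      then show "norm (K / (1 + \<xi>)\<^sup>2 * (norm (m1 \<xi>) + norm (m2 \<xi>))) \<le> K * (2 * B) / (1 + \<xi>)\<^sup>2"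
        using x bounded[of \<xi>] K_nonneg by (simp add: abs_mult mult_left_mono divide_right_mono)
    qed
    fix \<xi> assume "\<xi> \<in> {x..}"
    then show "norm (u \<xi>) * (norm (m1 \<xi>) + norm (m2 \<xi>)) \<le> K / (1 + \<xi>)\<^sup>2 * (norm (m1 \<xi>) + norm (m2 \<xi>))"
      using x decay_u[of \<xi>] by (intro mult_right_mono) auto
  qed
  finally show ?thesis .
qed

lemma jost_norm_le: "0 \<le> x \<Longrightarrow> norm (m1 x) + norm (m2 x) \<le> jost_bound"
  unfolding jost_bound_def
  by (rule gronwall_tail_integral[OF K_nonneg _ _ _ jost_norm_inequality, where B="2 * B"])
     (auto intro!: continuous_intros continuous_m1 continuous_m2 dest: bounded)

lemma norm_m1_le: "0 \<le> x \<Longrightarrow> norm (m1 x) \<le> jost_bound"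
  and norm_m2_le: "0 \<le> x \<Longrightarrow> norm (m2 x) \<le> jost_bound"
  using jost_norm_le[of x] norm_ge_zero[of "m1 x"] norm_ge_zero[of "m2 x"] by linarith+

section \<open>Large-k expansion of the column at x = 0\<close>

lemma norm_2ik: "norm (2 * \<i> * k) = 2 * norm k"
  by (simp add: norm_mult)

definition d_um2 :: "real \<Rightarrow> complex" where
  "d_um2 \<xi> = u1 \<xi> * m2 \<xi> + u \<xi> * (complex_of_real lam * cnj (u \<xi>) * m1 \<xi>)"

lemma has_derivative_u_m2: "0 \<le> x \<Longrightarrow> ((\<lambda>\<xi>. u \<xi> * m2 \<xi>) has_vector_derivative d_um2 x) (at x within {0..})"
  unfolding d_um2_def using has_derivative_u has_derivative_m2 by (auto intro!: derivative_eq_intros)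

lemma continuous_d_um2: "continuous_on {0..} d_um2"
  unfolding d_um2_def by (intro continuous_intros continuous_u continuous_u1 continuous_m1 continuous_m2)

lemma decay_d_um2: "0 \<le> x \<Longrightarrow> norm (d_um2 x) \<le> C1 / (1 + x)\<^sup>2"
  unfolding d_um2_def C1_def
  by (intro norm_add_le_decay norm_mult_le_decay decay_u decay_u1 norm_m2_le
      norm_lam_cnj_mult_le[OF abs_lam norm_u_le norm_m1_le])

lemma m1_by_parts:
  assumes x: "0 \<le> x"
  shows "m1 x - u x * m2 x / (2 * \<i> * k) =
    integral {x..} (\<lambda>\<xi>. exp (2 * \<i> * k * complex_of_real (\<xi> - x)) * d_um2 \<xi>) / (2 * \<i> * k)"
proof -
  have "((\<lambda>\<xi>. exp (2 * \<i> * k * complex_of_real (\<xi> - x)) * (u \<xi> * m2 \<xi>)) has_integral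
     (- (u x * m2 x) / (2 * \<i> * k) - integral {x..} (\<lambda>\<xi>. exp (2 * \<i> * k * complex_of_real (\<xi> - x)) * d_um2 \<xi>) / (2 * \<i> * k))) {x..}"
  proof (rule oscillatory_integral_by_parts[OF x k(1) k_nonzero])
    show "((\<lambda>\<xi>. u \<xi> * m2 \<xi>) has_vector_derivative d_um2 \<xi>) (at \<xi> within {x..})" if "x \<le> \<xi>" for \<xi>
      using x that by (auto intro: has_vector_derivative_within_subset[OF has_derivative_u_m2])
    show "continuous_on {x..} d_um2"
      using x by (auto intro: continuous_on_subset[OF continuous_d_um2])
    show "norm (u \<xi> * m2 \<xi>) \<le> (K * jost_bound) / (1 + \<xi>)\<^sup>2" if "x \<le> \<xi>" for \<xi>
      using x that by (intro norm_mult_le_decay decay_u norm_m2_le) auto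
    show "norm (d_um2 \<xi>) \<le> C1 / (1 + \<xi>)\<^sup>2" if "x \<le> \<xi>" for \<xi>
      using x that by (intro decay_d_um2) auto
  qed
  from has_integral_unique[OF volterra1[OF x] this[unfolded mult.assoc[symmetric]]]
  show ?thesis by (simp add: algebra_simps diff_divide_distrib)
qed

lemma norm_m1_approx_le:
  assumes x: "0 \<le> x"
  shows "norm (m1 x - u x * m2 x / (2 * \<i> * k)) \<le> C1 / (2 * norm k)"
proof -
  have "norm (integral {x..} (\<lambda>\<xi>. exp (2 * \<i> * k * complex_of_real (\<xi> - x)) * d_um2 \<xi>)) \<le> C1 / (1 + x)"
    using x by (intro dominated_by_inverse_square(3) continuous_intros norm_mult_le_if_norm_le_one
        norm_exp_oscillation_le_1 k decay_d_um2 continuous_on_subset[OF continuous_d_um2]) auto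
  also have "\<dots> \<le> C1" using x constants_nonneg by (intro divide_one_plus_le) auto
  finally show ?thesis unfolding m1_by_parts[OF x] norm_divide norm_2ik
    by (simp add: divide_right_mono)
qed

lemma norm_m1_le_inverse: "0 \<le> x \<Longrightarrow> norm (m1 x) \<le> C2 / norm k"
proof -
  assume x: "0 \<le> x"
  have "norm (u x * m2 x / (2 * \<i> * k)) \<le> K * jost_bound / (2 * norm k)"
    unfolding norm_divide norm_2ik
    by (intro divide_right_mono order_trans[OF norm_mult_ineq] mult_mono norm_u_le norm_m2_le x)
       (auto simp: K_nonneg)
  then have "norm (m1 x) \<le> C1 / (2 * norm k) + K * jost_bound / (2 * norm k)"
    using norm_m1_approx_le[OF x] norm_triangle_ineq[of "m1 x - u x * m2 x / (2 * \<i> * k)" "u x * m2 x / (2 * \<i> * k)"]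
    by simp
  also have "\<dots> = C2 / norm k" by (simp add: C2_def add_divide_distrib algebra_simps)
  finally show ?thesis .
qed

lemma norm_m2_minus_1_le:
  assumes x: "0 \<le> x"
  shows "norm (m2 x - 1) \<le> K * C2 / norm k"
proof -
  have "norm (complex_of_real lam * cnj (u \<xi>) * m1 \<xi>) \<le> K * (C2 / norm k) / (1 + \<xi>)\<^sup>2" if "x \<le> \<xi>" for \<xi>
  proof -
    have "norm (complex_of_real lam * cnj (u \<xi>) * m1 \<xi>) \<le> K / (1 + \<xi>)\<^sup>2 * (C2 / norm k)"
      using x that by (intro norm_lam_cnj_mult_le abs_lam decay_u norm_m1_le_inverse) auto
    then show ?thesis by (simp add: ac_simps)
  qed
  then have "norm (integral {x..} (\<lambda>\<xi>. complex_of_real lam * cnj (u \<xi>) * m1 \<xi>)) \<le> K * (C2 / norm k) / (1 + x)"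
    using x by (intro dominated_by_inverse_square(3) continuous_intros continuous_on_subset[OF continuous_u]
        continuous_on_subset[OF continuous_m1]) auto
  also have "\<dots> \<le> K * (C2 / norm k)" using x constants_nonneg K_nonneg by (intro divide_one_plus_le) auto
  finally show ?thesis using integral_unique[OF volterra2[OF x]] by (simp add: norm_minus_commute)
qed

definition d_correction :: "real \<Rightarrow> complex" where
  "d_correction \<xi> = u1 \<xi> * (m2 \<xi> - 1) + u \<xi> * (complex_of_real lam * cnj (u \<xi>) * m1 \<xi>)"

lemma d_um2_eq_u1_plus_d_correction: "d_um2 \<xi> = u1 \<xi> + d_correction \<xi>"
  by (simp add: d_um2_def d_correction_def algebra_simps)

lemma continuous_d_correction: "continuous_on {0..} d_correction"
  unfolding d_correction_def by (intro continuous_intros continuous_u continuous_u1 continuous_m1 continuous_m2)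

lemma norm_lam_cnj_m1_le: "0 \<le> x \<Longrightarrow> norm a \<le> K \<Longrightarrow> norm (complex_of_real lam * cnj a * m1 x) \<le> K * (C2 / norm k)"
  by (intro norm_lam_cnj_mult_le abs_lam norm_m1_le_inverse)

lemma decay_d_correction: "0 \<le> x \<Longrightarrow> norm (d_correction x) \<le> (C5 / norm k) / (1 + x)\<^sup>2"
proof -
  assume x: "0 \<le> x"
  have "norm (d_correction x) \<le> (K * (K * C2 / norm k) + K * (K * (C2 / norm k))) / (1 + x)\<^sup>2"
    unfolding d_correction_def
    by (intro norm_add_le_decay norm_mult_le_decay decay_u decay_u1 norm_m2_minus_1_le x
        norm_lam_cnj_m1_le norm_u_le)
  also have "K * (K * C2 / norm k) + K * (K * (C2 / norm k)) = C5 / norm k"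
    by (simp add: C5_def field_simps)
  finally show ?thesis .
qed

lemma norm_m1_approx_le_sharp:
  assumes x: "0 \<le> x"
  shows "norm (m1 x - u x * m2 x / (2 * \<i> * k)) \<le> C3 / (2 * (norm k)\<^sup>2)"
proof -
  define E where "E \<xi> = exp (2 * \<i> * k * complex_of_real (\<xi> - x))" for \<xi>
  have d_correction_bound: "norm (E \<xi> * d_correction \<xi>) \<le> (C5 / norm k) / (1 + \<xi>)\<^sup>2" if "x \<le> \<xi>" for \<xi>
    unfolding E_def using x that by (intro norm_mult_le_if_norm_le_one norm_exp_oscillation_le_1 k decay_d_correction) auto
  have d_correction_cont: "continuous_on {x..} (\<lambda>\<xi>. E \<xi> * d_correction \<xi>)"
    unfolding E_def using x by (intro continuous_intros continuous_on_subset[OF continuous_d_correction]) auto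
  have u1_bound: "norm (integral {x..} (\<lambda>\<xi>. E \<xi> * u1 \<xi>)) \<le> K / norm k"
    unfolding E_def using x
    by (intro norm_oscillatory_integral_le[where h'=u2, OF x k(1) k_nonzero] decay_u1 decay_u2
        has_vector_derivative_within_subset[OF has_derivative_u1] continuous_on_subset[OF continuous_u2]) auto
  have "norm (integral {x..} (\<lambda>\<xi>. E \<xi> * d_correction \<xi>)) \<le> (C5 / norm k) / (1 + x)"
    by (rule dominated_by_inverse_square(3)[OF x d_correction_cont d_correction_bound])
  also have "\<dots> \<le> C5 / norm k" using x constants_nonneg norm_k_pos by (intro divide_one_plus_le) auto
  finally have d_correction_int_bound: "norm (integral {x..} (\<lambda>\<xi>. E \<xi> * d_correction \<xi>)) \<le> C5 / norm k" .
  have "integral {x..} (\<lambda>\<xi>. E \<xi> * d_um2 \<xi>) = integral {x..} (\<lambda>\<xi>. E \<xi> * u1 \<xi>) + integral {x..} (\<lambda>\<xi>. E \<xi> * d_correction \<xi>)"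
  proof -
    have "(\<lambda>\<xi>. E \<xi> * u1 \<xi>) integrable_on {x..}"
      unfolding E_def using x
      by (intro dominated_by_inverse_square(2)[where C=K] continuous_intros continuous_on_subset[OF continuous_u1]
          norm_mult_le_if_norm_le_one norm_exp_oscillation_le_1 k decay_u1) auto
    moreover have "(\<lambda>\<xi>. E \<xi> * d_correction \<xi>) integrable_on {x..}"
      by (rule dominated_by_inverse_square(2)[OF x d_correction_cont d_correction_bound])
    ultimately show ?thesis unfolding d_um2_eq_u1_plus_d_correction distrib_left by (rule integral_add)
  qed
  then have "norm (integral {x..} (\<lambda>\<xi>. E \<xi> * d_um2 \<xi>)) \<le> K / norm k + C5 / norm k"
    using u1_bound d_correction_int_bound by (simp add: order_trans[OF norm_triangle_ineq add_mono])
  also have "\<dots> = C3 / norm k" by (simp add: C3_def C5_def add_divide_distrib)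
  finally have bound: "norm (integral {x..} (\<lambda>\<xi>. E \<xi> * d_um2 \<xi>)) \<le> C3 / norm k" .
  have "norm (m1 x - u x * m2 x / (2 * \<i> * k)) = norm (integral {x..} (\<lambda>\<xi>. E \<xi> * d_um2 \<xi>)) / (2 * norm k)"
    unfolding m1_by_parts[OF x] E_def norm_divide norm_2ik ..
  also have "\<dots> \<le> (C3 / norm k) / (2 * norm k)" by (rule divide_right_mono[OF bound]) (use norm_k_pos in simp)
  also have "\<dots> = C3 / (2 * (norm k)\<^sup>2)" by (simp add: power2_eq_square)
  finally show ?thesis .
qed

definition d_m1 :: "real \<Rightarrow> complex" where
  "d_m1 x = - 2 * \<i> * k * m1 x + u x * m2 x"

lemma norm_d_m1_le:
  assumes x: "0 \<le> x"
  shows "norm (d_m1 x) \<le> C3 / norm k"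
proof -
  have "d_m1 x = - (2 * \<i> * k) * (m1 x - u x * m2 x / (2 * \<i> * k))"
    using k_nonzero by (simp add: d_m1_def field_simps)
  then have "norm (d_m1 x) = 2 * norm k * norm (m1 x - u x * m2 x / (2 * \<i> * k))"
    by (simp add: norm_mult)
  also have "\<dots> \<le> 2 * norm k * (C3 / (2 * (norm k)\<^sup>2))"
    using norm_m1_approx_le_sharp[OF x] norm_k_pos by (intro mult_left_mono) auto
  also have "\<dots> = C3 / norm k" using norm_k_pos by (simp add: power2_eq_square)
  finally show ?thesis .
qed

lemma norm_m1_leading_le:
  assumes x: "0 \<le> x"
  shows "norm (m1 x - u x / (2 * \<i> * k)) \<le> C4 / (norm k)\<^sup>2"
proof -
  have "norm (u x * (m2 x - 1) / (2 * \<i> * k)) \<le> K * (K * C2 / norm k) / (2 * norm k)"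
    unfolding norm_divide norm_2ik using norm_k_pos
    by (intro divide_right_mono order_trans[OF norm_mult_ineq] mult_mono norm_u_le x norm_m2_minus_1_le)
       (auto simp: K_nonneg)
  also have "\<dots> = K * K * C2 / (2 * (norm k)\<^sup>2)" by (simp add: power2_eq_square)
  finally have second: "norm (u x * (m2 x - 1) / (2 * \<i> * k)) \<le> K * K * C2 / (2 * (norm k)\<^sup>2)" .
  have split: "m1 x - u x / (2 * \<i> * k) = (m1 x - u x * m2 x / (2 * \<i> * k)) + u x * (m2 x - 1) / (2 * \<i> * k)"
    by (simp add: algebra_simps diff_divide_distrib)
  have "norm (m1 x - u x / (2 * \<i> * k)) \<le> C3 / (2 * (norm k)\<^sup>2) + K * K * C2 / (2 * (norm k)\<^sup>2)"
    unfolding split using norm_m1_approx_le_sharp[OF x] second by (intro order_trans[OF norm_triangle_ineq] add_mono)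
  also have "\<dots> = C4 / (norm k)\<^sup>2" by (simp add: C4_def add_divide_distrib)
  finally show ?thesis .
qed

lemma m2_zero_expansion: "norm (m2 0 - 1 + complex_of_real lam * mass u / (2 * \<i> * k)) \<le> C_m2 / (norm k)\<^sup>2"
proof -
  define c where "c = 2 * \<i> * k"
  define d where "d \<xi> = complex_of_real lam * cnj (u \<xi>) * (m1 \<xi> - u \<xi> / c)" for \<xi>
  have d_decay: "norm (d \<xi>) \<le> (K * (C4 / (norm k)\<^sup>2)) / (1 + \<xi>)\<^sup>2" if "0 \<le> \<xi>" for \<xi>
  proof -
    have "norm (d \<xi>) \<le> K / (1 + \<xi>)\<^sup>2 * (C4 / (norm k)\<^sup>2)"
      unfolding d_def c_def using that by (intro norm_lam_cnj_mult_le abs_lam decay_u norm_m1_leading_le)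
    then show ?thesis by (simp add: ac_simps)
  qed
  have d_cont: "continuous_on {0..} d"
    unfolding d_def by (intro continuous_intros continuous_u continuous_m1) (use k_nonzero in \<open>simp add: c_def\<close>)
  have d_int: "d integrable_on {0..}"
    by (rule dominated_by_inverse_square(2)[OF order_refl d_cont d_decay]) simp
  have d_bound: "norm (integral {0..} d) \<le> K * (C4 / (norm k)\<^sup>2) / (1 + 0)"
    by (rule dominated_by_inverse_square(3)[OF order_refl d_cont d_decay]) simp
  have "1 - m2 0 = integral {0..} (\<lambda>\<xi>. complex_of_real lam * cnj (u \<xi>) * m1 \<xi>)"
    using integral_unique[OF volterra2[of 0]] by simp
  also have "\<dots> = integral {0..} (\<lambda>\<xi>. (complex_of_real lam / c) * (cnj (u \<xi>) * u \<xi>) + d \<xi>)"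
    using k_nonzero by (intro integral_cong) (simp add: d_def c_def field_simps)
  also have "\<dots> = (complex_of_real lam / c) * mass u + integral {0..} d"
    unfolding mass_def
    by (intro integral_unique has_integral_add has_integral_mult_right integrable_integral integrable_mass d_int)
  finally have "m2 0 - 1 + complex_of_real lam * mass u / c = - integral {0..} d"
    by (simp add: algebra_simps)
  then show ?thesis using d_bound by (simp add: c_def C_m2_def)
qed

definition dd_correction :: "real \<Rightarrow> complex" where
  "dd_correction x = u2 x * (m2 x - 1) + u1 x * (complex_of_real lam * cnj (u x) * m1 x) +
     (u1 x * (complex_of_real lam * cnj (u x) * m1 x)
      + u x * (complex_of_real lam * cnj (u1 x) * m1 x + complex_of_real lam * cnj (u x) * d_m1 x))"

lemma has_derivative_u_m2_minus_1:
  "0 \<le> x \<Longrightarrow> ((\<lambda>\<xi>. u \<xi> * (m2 \<xi> - 1)) has_vector_derivative d_correction x) (at x within {0..})"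
  unfolding d_correction_def using has_derivative_u has_derivative_m2
  by (auto intro!: derivative_eq_intros simp: algebra_simps)

lemma decay_u_m2_minus_1: "0 \<le> x \<Longrightarrow> norm (u x * (m2 x - 1)) \<le> (K * (K * C2 / norm k)) / (1 + x)\<^sup>2"
  by (intro norm_mult_le_decay decay_u norm_m2_minus_1_le)

lemma has_derivative_d_correction: "0 \<le> x \<Longrightarrow> (d_correction has_vector_derivative dd_correction x) (at x within {0..})"
  unfolding d_correction_def dd_correction_def using has_derivative_u has_derivative_u1 has_derivative_m2 has_derivative_m1
  by (auto intro!: derivative_eq_intros simp: algebra_simps d_m1_def)

lemma continuous_dd_correction: "continuous_on {0..} dd_correction"
  unfolding dd_correction_def d_m1_def
  by (intro continuous_intros continuous_u continuous_u1 continuous_u2 continuous_m1 continuous_m2)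

lemma decay_dd_correction: "0 \<le> x \<Longrightarrow> norm (dd_correction x) \<le> (C6 / norm k) / (1 + x)\<^sup>2"
proof -
  assume x: "0 \<le> x"
  have "norm (dd_correction x) \<le> (K * (K * C2 / norm k) + K * (K * (C2 / norm k)) +
      (K * (K * (C2 / norm k)) + K * (K * (C2 / norm k) + K * (C3 / norm k)))) / (1 + x)\<^sup>2"
    unfolding dd_correction_def
    by (intro norm_add_le_decay norm_mult_le_decay decay_u decay_u1 decay_u2 norm_m2_minus_1_le x
        norm_triangle_le add_mono norm_lam_cnj_m1_le norm_u_le norm_u1_le
        norm_lam_cnj_mult_le[OF abs_lam norm_u_le norm_d_m1_le])
  also have "K * (K * C2 / norm k) + K * (K * (C2 / norm k)) +
      (K * (K * (C2 / norm k)) + K * (K * (C2 / norm k) + K * (C3 / norm k))) = C6 / norm k"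
    using norm_k_pos by (simp add: C6_def field_simps)
  finally show ?thesis .
qed

lemma norm_oscillatory_d_correction_integral_le:
  "norm (integral {0..} (\<lambda>\<xi>. exp (2 * \<i> * k * complex_of_real (\<xi> - 0)) * d_correction \<xi>)) \<le> (C5 + C6) / (2 * (norm k)\<^sup>2)"
proof -
  have "norm (integral {0..} (\<lambda>\<xi>. exp (2 * \<i> * k * complex_of_real (\<xi> - 0)) * d_correction \<xi>) + d_correction 0 / (2 * \<i> * k))
      \<le> (C6 / norm k) / (2 * norm k)"
    by (rule oscillatory_integral_by_parts_remainder[where C="C5 / norm k" and h'=dd_correction])
       (simp_all only: order_refl not_False_eq_True k k_nonzero has_derivative_d_correction continuous_dd_correction
         decay_d_correction decay_dd_correction)
  moreover have "norm (d_correction 0 / (2 * \<i> * k)) \<le> (C5 / norm k) / (2 * norm k)"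
    unfolding norm_divide norm_2ik using decay_d_correction[of 0] norm_k_pos by (intro divide_right_mono) auto
  ultimately have "norm (integral {0..} (\<lambda>\<xi>. exp (2 * \<i> * k * complex_of_real (\<xi> - 0)) * d_correction \<xi>))
      \<le> (C6 / norm k) / (2 * norm k) + (C5 / norm k) / (2 * norm k)"
    using norm_triangle_ineq4[of "integral {0..} (\<lambda>\<xi>. exp (2 * \<i> * k * complex_of_real (\<xi> - 0)) * d_correction \<xi>)
      + d_correction 0 / (2 * \<i> * k)" "d_correction 0 / (2 * \<i> * k)"] by simp
  also have "\<dots> = (C5 + C6) / (2 * (norm k)\<^sup>2)" using norm_k_pos by (simp add: field_simps power2_eq_square)
  finally show ?thesis .
qed

lemma m1_zero_remainder:
  "m1 0 - u 0 / (2 * \<i> * k) - (u1 0 / 4 + complex_of_real lam * u 0 * mass u / 4) / k\<^sup>2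
    = - integral {0..} (\<lambda>\<xi>. exp (2 * \<i> * k * complex_of_real (\<xi> - 0)) * u2 \<xi>) / (2 * \<i> * k)\<^sup>2
      + u 0 * (m2 0 - 1 + complex_of_real lam * mass u / (2 * \<i> * k)) / (2 * \<i> * k)
      + integral {0..} (\<lambda>\<xi>. exp (2 * \<i> * k * complex_of_real (\<xi> - 0)) * d_correction \<xi>) / (2 * \<i> * k)"
proof -
  define c where "c = 2 * \<i> * k"
  have c0: "c \<noteq> 0" using k_nonzero by (simp add: c_def)
  define E where "E \<xi> = exp (2 * \<i> * k * complex_of_real (\<xi> - 0))" for \<xi>
  define J1 where "J1 = integral {0..} (\<lambda>\<xi>. E \<xi> * u1 \<xi>)"
  define J2 where "J2 = integral {0..} (\<lambda>\<xi>. E \<xi> * u2 \<xi>)"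
  define J3 where "J3 = integral {0..} (\<lambda>\<xi>. E \<xi> * d_correction \<xi>)"
  have "((\<lambda>\<xi>. E \<xi> * u \<xi>) has_integral (- u 0 / c - J1 / c)) {0..}"
    unfolding E_def J1_def c_def
    by (rule oscillatory_integral_by_parts[where C=K and C'=K])
       (use k k_nonzero in \<open>auto intro: has_derivative_u continuous_u1 decay_u decay_u1\<close>)
  moreover have "((\<lambda>\<xi>. E \<xi> * (u \<xi> * (m2 \<xi> - 1))) has_integral (- (u 0 * (m2 0 - 1)) / c - J3 / c)) {0..}"
    unfolding E_def J3_def c_def
    by (rule oscillatory_integral_by_parts[where C="K * (K * C2 / norm k)" and C'="C5 / norm k"])
       (simp_all only: order_refl not_False_eq_True k k_nonzero has_derivative_u_m2_minus_1 continuous_d_correction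
         decay_d_correction decay_u_m2_minus_1)
  ultimately have "((\<lambda>\<xi>. E \<xi> * u \<xi> * m2 \<xi>) has_integral
      (- u 0 / c - J1 / c) + (- (u 0 * (m2 0 - 1)) / c - J3 / c)) {0..}"
    by (auto dest: has_integral_add simp: algebra_simps)
  from has_integral_unique[OF volterra1[OF order_refl] this[unfolded E_def]]
  have m1_0: "m1 0 = u 0 / c + J1 / c + u 0 * (m2 0 - 1) / c + J3 / c"
    using c0 by (simp add: field_simps)
  have J1_eq: "J1 = - u1 0 / c - J2 / c"
    unfolding J1_def E_def c_def J2_def
    by (rule integral_unique, rule oscillatory_integral_by_parts[where C=K and C'=K])
       (use k k_nonzero in \<open>auto intro: has_derivative_u1 continuous_u2 decay_u1 decay_u2\<close>)
  have k_sq: "k\<^sup>2 = - (c * c) / 4" by (simp add: c_def power2_eq_square algebra_simps)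
  have "m1 0 - u 0 / c - (u1 0 / 4 + complex_of_real lam * u 0 * mass u / 4) / k\<^sup>2
      = - J2 / c\<^sup>2 + u 0 * (m2 0 - 1 + complex_of_real lam * mass u / c) / c + J3 / c"
    unfolding m1_0 J1_eq k_sq using c0 by (simp add: field_simps power2_eq_square)
  then show ?thesis unfolding c_def J2_def J3_def E_def .
qed

lemma m1_zero_expansion:
  "norm (m1 0 - u 0 / (2 * \<i> * k) - (u1 0 / 4 + complex_of_real lam * u 0 * mass u / 4) / k\<^sup>2) \<le> C_m1 / (norm k) ^ 3"
proof -
  have term1: "norm (- integral {0..} (\<lambda>\<xi>. exp (2 * \<i> * k * complex_of_real (\<xi> - 0)) * u2 \<xi>) / (2 * \<i> * k)\<^sup>2)
      \<le> (K / norm k) / (4 * (norm k)\<^sup>2)"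
  proof -
    have "norm (integral {0..} (\<lambda>\<xi>. exp (2 * \<i> * k * complex_of_real (\<xi> - 0)) * u2 \<xi>)) \<le> K / norm k"
      by (rule norm_oscillatory_integral_le[where h'=u3])
         (use k k_nonzero in \<open>auto intro: has_derivative_u2 continuous_u3 decay_u2 decay_u3\<close>)
    then have "norm (integral {0..} (\<lambda>\<xi>. exp (2 * \<i> * k * complex_of_real (\<xi> - 0)) * u2 \<xi>)) / (4 * (norm k)\<^sup>2)
        \<le> (K / norm k) / (4 * (norm k)\<^sup>2)"
      by (rule divide_right_mono) simp
    then show ?thesis unfolding norm_divide norm_minus_cancel norm_power norm_2ik by (simp add: power2_eq_square)
  qed
  have term2: "norm (u 0 * (m2 0 - 1 + complex_of_real lam * mass u / (2 * \<i> * k)) / (2 * \<i> * k))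
      \<le> K * (C_m2 / (norm k)\<^sup>2) / (2 * norm k)"
    unfolding norm_divide norm_2ik using norm_k_pos m2_zero_expansion
    by (intro divide_right_mono order_trans[OF norm_mult_ineq] mult_mono norm_u_le) (auto simp: K_nonneg)
  have term3: "norm (integral {0..} (\<lambda>\<xi>. exp (2 * \<i> * k * complex_of_real (\<xi> - 0)) * d_correction \<xi>) / (2 * \<i> * k))
      \<le> ((C5 + C6) / (2 * (norm k)\<^sup>2)) / (2 * norm k)"
    unfolding norm_divide norm_2ik
    by (rule divide_right_mono[OF norm_oscillatory_d_correction_integral_le]) (use norm_k_pos in simp)
  have "norm (m1 0 - u 0 / (2 * \<i> * k) - (u1 0 / 4 + complex_of_real lam * u 0 * mass u / 4) / k\<^sup>2)
      \<le> (K / norm k) / (4 * (norm k)\<^sup>2) + K * (C_m2 / (norm k)\<^sup>2) / (2 * norm k)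
        + ((C5 + C6) / (2 * (norm k)\<^sup>2)) / (2 * norm k)"
    unfolding m1_zero_remainder using term1 term2 term3
    by (intro order_trans[OF norm_triangle_ineq] add_mono order_trans[OF norm_triangle_ineq]) auto
  also have "\<dots> = C_m1 / (norm k) ^ 3"
    using norm_k_pos by (simp add: C_m1_def C_m2_def field_simps power2_eq_square power3_eq_cube)
  finally show ?thesis .
qed

end

section \<open>Expansion of a quotient\<close>

lemma half_le_norm_if_near_one:
  fixes m2 D k :: complex and CB :: real
  assumes k1: "1 \<le> norm k" and kR: "4 * (norm D + CB) \<le> norm k" and CB0: "0 \<le> CB"
    and e2: "norm (m2 - 1 + D / k) \<le> CB / norm k ^ 2"
  shows "1 / 2 \<le> norm m2"
proof -
  have "norm (m2 - 1) \<le> norm (D / k) + norm (m2 - 1 + D / k)"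
    using norm_triangle_ineq4[of "m2 - 1 + D / k" "D / k"] by simp
  also have "\<dots> \<le> norm D / norm k + CB / norm k"
  proof -
    have "norm k \<le> norm k ^ 2"
      using mult_right_mono[OF k1 norm_ge_zero[of k]] by (simp add: power2_eq_square)
    then have "CB / norm k ^ 2 \<le> CB / norm k"
      by (rule divide_left_mono[OF _ CB0]) (use k1 in \<open>auto simp: zero_less_mult_iff\<close>)
    then show ?thesis using e2 by (simp add: norm_divide)
  qed
  also have "\<dots> = (norm D + CB) / norm k" by (simp add: add_divide_distrib)
  also have "\<dots> \<le> 1 / 4" using kR k1 by (simp add: divide_simps)
  finally show ?thesis using norm_triangle_ineq4[of m2 "m2 - 1"] by simp
qed

lemma norm_quotient_expansion_le:
  fixes m1 m2 A B D k :: complex and CA CB :: real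
  assumes k1: "1 \<le> norm k" and kR: "4 * (norm D + CB) \<le> norm k" and CB0: "0 \<le> CB"
    and e1: "norm (m1 - A / k - (B - A * D) / k\<^sup>2) \<le> CA / norm k ^ 3"
    and e2: "norm (m2 - 1 + D / k) \<le> CB / norm k ^ 2"
  shows "norm (m1 / m2 - A / k - B / k\<^sup>2) \<le> 2 * (CA + norm B * norm D + (norm A + norm B) * CB) / norm k ^ 3"
proof -
  define n where "n = norm k"
  have n1: "1 \<le> n" using k1 by (simp add: n_def)
  have k0: "k \<noteq> 0" using k1 by auto
  have m2b: "1 / 2 \<le> norm m2" by (rule half_le_norm_if_near_one[OF k1 kR CB0 e2])
  define E1 where "E1 = m1 - A / k - (B - A * D) / k\<^sup>2"
  define E2 where "E2 = m2 - 1 + D / k"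
  define P where "P = A / k + B / k\<^sup>2"
  have key: "m1 - P * m2 = E1 + B * D / k ^ 3 - P * E2"
    unfolding E1_def E2_def P_def using k0 by (simp add: field_simps power2_eq_square power3_eq_cube)
  have nP: "norm P \<le> (norm A + norm B) / n"
  proof -
    have "norm P \<le> norm A / n + norm B / n ^ 2"
      unfolding P_def by (rule order_trans[OF norm_triangle_ineq]) (simp add: norm_divide norm_power n_def)
    also have "norm B / n ^ 2 \<le> norm B / n"
      using n1 by (intro divide_left_mono) (auto simp: power2_eq_square intro: mult_right_mono[of 1 n n, simplified])
    finally show ?thesis by (simp add: add_divide_distrib)
  qed
  have "norm (m1 - P * m2) \<le> CA / n ^ 3 + norm B * norm D / n ^ 3 + (norm A + norm B) / n * (CB / n ^ 2)"
  proof -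
    have "norm (m1 - P * m2) \<le> norm E1 + norm (B * D / k ^ 3) + norm (P * E2)"
      unfolding key by (rule order_trans[OF norm_triangle_ineq4]) (simp add: norm_triangle_ineq)
    also have "norm (B * D / k ^ 3) = norm B * norm D / n ^ 3" by (simp add: norm_divide norm_mult norm_power n_def)
    also have "norm (P * E2) \<le> (norm A + norm B) / n * (CB / n ^ 2)"
      unfolding norm_mult using e2 by (intro mult_mono[OF nP]) (auto simp: E2_def n_def)
    finally show ?thesis using e1 by (simp add: E1_def n_def)
  qed
  also have "\<dots> = (CA + norm B * norm D + (norm A + norm B) * CB) / n ^ 3"
    using n1 by (simp add: field_simps power2_eq_square power3_eq_cube)
  finally have nk: "norm (m1 - P * m2) \<le> (CA + norm B * norm D + (norm A + norm B) * CB) / n ^ 3" .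
  have "m2 \<noteq> 0" using m2b by auto
  then have "norm (m1 / m2 - A / k - B / k\<^sup>2) = norm (m1 - P * m2) / norm m2"
    unfolding P_def by (simp add: field_simps norm_divide)
  also have "\<dots> \<le> norm (m1 - P * m2) / (1 / 2)"
    using m2b by (intro divide_left_mono) auto
  also have "\<dots> \<le> ((CA + norm B * norm D + (norm A + norm B) * CB) / n ^ 3) / (1 / 2)"
    by (intro divide_right_mono nk) auto
  finally show ?thesis by (simp add: n_def algebra_simps)
qed

lemma quotient_expansion:
  fixes m1 m2 :: "complex \<Rightarrow> complex" and A B D :: complex and CA CB :: real
  assumes "0 \<le> CB"
    and "\<And>k. k \<in> S \<Longrightarrow> 1 \<le> norm k \<Longrightarrow> norm (m1 k - A / k - (B - A * D) / k\<^sup>2) \<le> CA / norm k ^ 3"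
    and "\<And>k. k \<in> S \<Longrightarrow> 1 \<le> norm k \<Longrightarrow> norm (m2 k - 1 + D / k) \<le> CB / norm k ^ 2"
  shows "\<exists>C R. \<forall>k\<in>S. R \<le> norm k \<longrightarrow> norm (m1 k / m2 k - A / k - B / k\<^sup>2) \<le> C / norm k ^ 3"
proof -
  have "norm (m1 k / m2 k - A / k - B / k\<^sup>2) \<le> 2 * (CA + norm B * norm D + (norm A + norm B) * CB) / norm k ^ 3"
    if k: "k \<in> S" "max 1 (4 * (norm D + CB)) \<le> norm k" for k
  proof -
    have k1: "1 \<le> norm k" using k(2) by simp
    show ?thesis
      by (rule norm_quotient_expansion_le[OF k1 _ assms(1) assms(2)[OF k(1) k1] assms(3)[OF k(1) k1]])
         (use k(2) in simp)
  qed
  then show ?thesis by blast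
qed

section \<open>Mass balance for the NLS equation\<close>

lemma continuous_on_slice_x:
  fixes f :: "real \<Rightarrow> real \<Rightarrow> complex"
  assumes "continuous_on (A \<times> B) (\<lambda>(x, t). f x t)" "t \<in> B"
  shows "continuous_on A (\<lambda>x. f x t)"
proof -
  have "continuous_on A (\<lambda>x. (\<lambda>(x, t). f x t) (x, t))"
    by (rule continuous_on_compose2[OF assms(1)]) (use assms(2) in \<open>auto intro!: continuous_intros\<close>)
  then show ?thesis by simp
qed

lemma continuous_on_slice_t:
  fixes f :: "real \<Rightarrow> real \<Rightarrow> complex"
  assumes "continuous_on (A \<times> B) (\<lambda>(x, t). f x t)" "x \<in> A"
  shows "continuous_on B (\<lambda>t. f x t)"
proof -
  have "continuous_on B (\<lambda>t. (\<lambda>(x, t). f x t) (x, t))"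
    by (rule continuous_on_compose2[OF assms(1)]) (use assms(2) in \<open>auto intro!: continuous_intros\<close>)
  then show ?thesis by simp
qed

locale nls_solution =
  fixes lam T :: real and q :: "real \<Rightarrow> real \<Rightarrow> complex"
  assumes smooth: "smooth_decaying T q" and nls: "solves_NLS lam T q" and T_pos: "0 < T"
begin

abbreviation mixed :: "nat \<Rightarrow> nat \<Rightarrow> real \<Rightarrow> real \<Rightarrow> complex" where
  "mixed m n \<equiv> (px ^^ m) ((pt T ^^ n) q)"

lemma has_derivative_x_mixed:
  "0 \<le> x \<Longrightarrow> t \<in> {0..T} \<Longrightarrow> ((\<lambda>y. mixed m n y t) has_vector_derivative px (mixed m n) x t) (at x within {0..})"
  and has_derivative_t_mixed:
  "0 \<le> x \<Longrightarrow> t \<in> {0..T} \<Longrightarrow> ((\<lambda>s. mixed m n x s) has_vector_derivative pt T (mixed m n) x t) (at t within {0..T})"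
  and continuous_mixed: "continuous_on ({0..} \<times> {0..T}) (\<lambda>(x, t). mixed m n x t)"
  and rapid_decay_mixed: "\<exists>C. \<forall>x\<ge>0. \<forall>t\<in>{0..T}. (1 + x) ^ N * norm (mixed m n x t) \<le> C"
  using smooth[unfolded smooth_decaying_def Let_def, rule_format, of m n] by simp_all

lemma has_derivative_q_t:
  "0 \<le> x \<Longrightarrow> t \<in> {0..T} \<Longrightarrow> ((\<lambda>s. q x s) has_vector_derivative pt T q x t) (at t within {0..T})"
  and has_derivative_q_x:
  "0 \<le> x \<Longrightarrow> t \<in> {0..T} \<Longrightarrow> ((\<lambda>y. q y t) has_vector_derivative px q x t) (at x within {0..})"
  and has_derivative_qx_x:
  "0 \<le> x \<Longrightarrow> t \<in> {0..T} \<Longrightarrow> ((\<lambda>y. px q y t) has_vector_derivative px (px q) x t) (at x within {0..})"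
  using has_derivative_t_mixed[of x t 0 0] has_derivative_x_mixed[of x t 0 0] has_derivative_x_mixed[of x t 1 0]
  by simp_all

lemma decay_mixed: "\<exists>C\<ge>0. \<forall>x\<ge>0. \<forall>t\<in>{0..T}. norm (mixed m n x t) \<le> C / (1 + x)\<^sup>2"
proof -
  obtain C where C: "\<forall>x\<ge>0. \<forall>t\<in>{0..T}. (1 + x) ^ 2 * norm (mixed m n x t) \<le> C"
    using rapid_decay_mixed by blast
  then have "norm (mixed m n x t) \<le> C / (1 + x)\<^sup>2" if "0 \<le> x" "t \<in> {0..T}" for x t
    using that by (simp add: pos_le_divide_eq mult.commute)
  moreover have "0 \<le> C" using C T_pos by (intro order_trans[OF _ C[rule_format, of 0 0]]) auto
  ultimately show ?thesis by blast
qed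

lemma uniform_decay_x_derivatives:
  "\<exists>K. \<forall>m\<le>M. \<forall>x\<ge>0. \<forall>t\<in>{0..T}. norm (mixed m 0 x t) \<le> K / (1 + x)\<^sup>2"
proof (induction M)
  case 0
  then show ?case using decay_mixed[of 0 0] by auto
next
  case (Suc M)
  then obtain K where K: "\<forall>m\<le>M. \<forall>x\<ge>0. \<forall>t\<in>{0..T}. norm (mixed m 0 x t) \<le> K / (1 + x)\<^sup>2" by blast
  obtain K' where K': "\<forall>x\<ge>0. \<forall>t\<in>{0..T}. norm (mixed (Suc M) 0 x t) \<le> K' / (1 + x)\<^sup>2"
    using decay_mixed by blast
  have "norm (mixed m 0 x t) \<le> max K K' / (1 + x)\<^sup>2" if "m \<le> Suc M" "0 \<le> x" "t \<in> {0..T}" for m x t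
  proof (cases "m \<le> M")
    case True
    then have "norm (mixed m 0 x t) \<le> K / (1 + x)\<^sup>2" using K that by auto
    also have "\<dots> \<le> max K K' / (1 + x)\<^sup>2" by (intro divide_right_mono) auto
    finally show ?thesis .
  next
    case False
    then have "norm (mixed m 0 x t) \<le> K' / (1 + x)\<^sup>2" using K' that by (simp add: le_Suc_eq)
    also have "\<dots> \<le> max K K' / (1 + x)\<^sup>2" by (intro divide_right_mono) auto
    finally show ?thesis .
  qed
  then show ?case by blast
qed

lemma zs_potential_slices:
  assumes "\<bar>lam\<bar> \<le> 1"
  obtains K where "\<And>s. s \<in> {0..T} \<Longrightarrow>
    zs_potential (\<lambda>x. q x s) (\<lambda>x. px q x s) (\<lambda>x. px (px q) x s) (\<lambda>x. px (px (px q)) x s) K lam"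
proof -
  obtain K where K: "\<forall>m\<le>3. \<forall>x\<ge>0. \<forall>t\<in>{0..T}. norm (mixed m 0 x t) \<le> K / (1 + x)\<^sup>2"
    using uniform_decay_x_derivatives by blast
  have "zs_potential (\<lambda>x. q x s) (\<lambda>x. px q x s) (\<lambda>x. px (px q) x s) (\<lambda>x. px (px (px q)) x s) K lam"
    if s: "s \<in> {0..T}" for s
  proof
    show "continuous_on {0..} (\<lambda>x. px (px (px q)) x s)"
      using continuous_on_slice_x[OF continuous_mixed[of 3 0] s] by (simp add: numeral_3_eq_3)
  qed (use K s assms has_derivative_q_x has_derivative_qx_x
       has_derivative_x_mixed[of _ s 2 0] in \<open>auto simp: numeral_2_eq_2 numeral_3_eq_3 dest: spec[of _ 3] spec[of _ 2] spec[of _ 1] spec[of _ 0]\<close>)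
  then show ?thesis using that by blast
qed

definition mass_density :: "real \<Rightarrow> real \<Rightarrow> complex" where
  "mass_density x s = cnj (q x s) * q x s"

definition mass_density_dt :: "real \<Rightarrow> real \<Rightarrow> complex" where
  "mass_density_dt x s = cnj (q x s) * pt T q x s + cnj (pt T q x s) * q x s"

definition mass_flux :: "real \<Rightarrow> real \<Rightarrow> complex" where
  "mass_flux x s = cnj (q x s) * px q x s - q x s * cnj (px q x s)"

definition mass_flux_dx :: "real \<Rightarrow> real \<Rightarrow> complex" where
  "mass_flux_dx x s = cnj (q x s) * px (px q) x s - q x s * cnj (px (px q) x s)"

lemma mass_density_dt_eq_mass_flux_dx:
  assumes x: "0 < x" and s: "s \<in> {0<..<T}"
  shows "mass_density_dt x s = \<i> * mass_flux_dx x s"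
proof -
  define R where "R = 2 * complex_of_real lam * complex_of_real ((norm (q x s))\<^sup>2) * q x s"
  have "\<i> * pt T q x s + px (px q) x s - R = 0"
    using nls x s unfolding solves_NLS_def R_def by blast
  then have "\<i> * (\<i> * pt T q x s + px (px q) x s - R) = 0" by simp
  then have qt: "pt T q x s = \<i> * (px (px q) x s - R)"
    by (simp add: algebra_simps)
  have "cnj R = 2 * complex_of_real lam * complex_of_real ((norm (q x s))\<^sup>2) * cnj (q x s)"
    by (simp add: R_def)
  then show ?thesis unfolding mass_density_dt_def mass_flux_dx_def qt by (simp add: R_def algebra_simps)
qed

lemma has_integral_mass_density_dt:
  assumes x: "0 \<le> x" and t: "t \<in> {0..T}"
  shows "((\<lambda>s. mass_density_dt x s) has_integral (mass_density x t - mass_density x 0)) {0..t}"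
proof -
  have "((\<lambda>s. mass_density x s) has_vector_derivative mass_density_dt x s) (at s within {0..t})" if "s \<in> {0..t}" for s
  proof -
    have d: "((\<lambda>s. q x s) has_vector_derivative pt T q x s) (at s within {0..t})"
      by (rule has_vector_derivative_within_subset[OF has_derivative_q_t[OF x]]) (use that t in auto)
    show ?thesis unfolding mass_density_def mass_density_dt_def
      by (rule has_vector_derivative_mult[OF has_vector_derivative_cnj[OF d] d])
  qed
  then show ?thesis using t by (intro fundamental_theorem_of_calculus) auto
qed

lemma has_integral_mass_flux_dx:
  assumes s: "s \<in> {0..T}" and X: "0 \<le> X"
  shows "((\<lambda>x. mass_flux_dx x s) has_integral (mass_flux X s - mass_flux 0 s)) {0..X}"
proof -
  have "((\<lambda>x. mass_flux x s) has_vector_derivative mass_flux_dx x s) (at x within {0..X})" if x: "x \<in> {0..X}" for x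
  proof -
    have d1: "((\<lambda>y. q y s) has_vector_derivative px q x s) (at x within {0..X})"
      using has_derivative_q_x[of x s] x s by (auto intro: has_vector_derivative_within_subset)
    have d2: "((\<lambda>y. px q y s) has_vector_derivative px (px q) x s) (at x within {0..X})"
      using has_derivative_qx_x[of x s] x s by (auto intro: has_vector_derivative_within_subset)
    show ?thesis unfolding mass_flux_def
      by (rule has_vector_derivative_eq_rhs[OF has_vector_derivative_diff[OF
           has_vector_derivative_mult[OF has_vector_derivative_cnj[OF d1] d2]
           has_vector_derivative_mult[OF d1 has_vector_derivative_cnj[OF d2]]]])
         (simp add: mass_flux_dx_def algebra_simps)
  qed
  then show ?thesis using X by (intro fundamental_theorem_of_calculus) auto
qed

lemma continuous_mass_density: "t \<in> {0..T} \<Longrightarrow> continuous_on {0..} (\<lambda>x. mass_density x t)"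
  unfolding mass_density_def
  using continuous_on_slice_x[OF continuous_mixed[of 0 0]] by (auto intro!: continuous_intros)

lemma continuous_mass_flux: "0 \<le> X \<Longrightarrow> continuous_on {0..T} (mass_flux X)"
  unfolding mass_flux_def
  using continuous_on_slice_t[OF continuous_mixed[of 0 0]] continuous_on_slice_t[OF continuous_mixed[of 1 0]]
  by (auto intro!: continuous_intros)

lemma continuous_mass_density_dt: "continuous_on ({0..} \<times> {0..T}) (\<lambda>(x, s). mass_density_dt x s)"
  unfolding mass_density_dt_def case_prod_unfold
  using continuous_mixed[of 0 0] continuous_mixed[of 0 1]
  by (auto simp: case_prod_unfold intro!: continuous_intros)

lemma mass_balance_truncated:
  assumes t: "t \<in> {0<..<T}" and X: "0 \<le> X"
  shows "integral {0..X} (\<lambda>x. mass_density x t) - integral {0..X} (\<lambda>x. mass_density x 0)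
       = \<i> * integral {0..t} (mass_flux X) - \<i> * integral {0..t} (mass_flux 0)"
proof -
  have tT: "t \<in> {0..T}" using t by auto
  have "integral {0..X} (\<lambda>x. mass_density x t) - integral {0..X} (\<lambda>x. mass_density x 0)
      = integral {0..X} (\<lambda>x. mass_density x t - mass_density x 0)"
    using tT T_pos
    by (intro integral_diff[symmetric] integrable_continuous_interval continuous_on_subset[OF continuous_mass_density]) auto
  also have "\<dots> = integral {0..X} (\<lambda>x. integral {0..t} (\<lambda>s. mass_density_dt x s))"
  proof (rule integral_cong)
    fix x assume "x \<in> {0..X}"
    then show "mass_density x t - mass_density x 0 = integral {0..t} (\<lambda>s. mass_density_dt x s)"
      using has_integral_mass_density_dt[OF _ tT, of x] by (simp add: integral_unique)
  qed
  also have "\<dots> = integral {0..t} (\<lambda>s. integral {0..X} (\<lambda>x. mass_density_dt x s))"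
  proof -
    have "cbox (0::real, 0::real) (X, t) \<subseteq> {0..} \<times> {0..T}" using t by (auto simp: cbox_Pair_eq)
    then have "continuous_on (cbox (0, 0) (X, t)) (\<lambda>(x, s). mass_density_dt x s)"
      by (rule continuous_on_subset[OF continuous_mass_density_dt])
    from integral_swap_continuous[OF this] show ?thesis by (simp add: cbox_interval)
  qed
  also have "\<dots> = integral {0..t} (\<lambda>s. \<i> * (mass_flux X s - mass_flux 0 s))"
  proof (rule integral_spike[of "{0}"])
    fix s assume "s \<in> {0..t} - {0}"
    then have s: "s \<in> {0<..<T}" "s \<in> {0..T}" using t by auto
    have "((\<lambda>x. mass_density_dt x s) has_integral \<i> * (mass_flux X s - mass_flux 0 s)) {0..X}"
      by (rule has_integral_spike_finite[where S="{0}", OF _ _ has_integral_mult_right[OF has_integral_mass_flux_dx[OF s(2) X]]])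
         (auto intro: mass_density_dt_eq_mass_flux_dx[OF _ s(1)])
    then show "\<i> * (mass_flux X s - mass_flux 0 s) = integral {0..X} (\<lambda>x. mass_density_dt x s)" by (simp add: integral_unique)
  qed simp
  also have "\<dots> = \<i> * integral {0..t} (mass_flux X) - \<i> * integral {0..t} (mass_flux 0)"
  proof -
    have "mass_flux Y integrable_on {0..t}" if "0 \<le> Y" for Y
      using t that by (intro integrable_continuous_interval continuous_on_subset[OF continuous_mass_flux]) auto
    then show ?thesis using X by (simp add: integral_diff right_diff_distrib)
  qed
  finally show ?thesis .
qed

lemma absolutely_integrable_mass_density:
  assumes s: "s \<in> {0..T}"
  shows "(\<lambda>x. mass_density x s) absolutely_integrable_on {0..}"
proof -
  obtain Kq where Kq: "0 \<le> Kq" "\<forall>x\<ge>0. \<forall>s\<in>{0..T}. norm (q x s) \<le> Kq / (1 + x)\<^sup>2"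
    using decay_mixed[of 0 0] by auto
  show ?thesis
  proof (rule dominated_by_inverse_square(1)[OF order_refl continuous_mass_density[OF s]])
    fix x :: real assume x: "0 \<le> x"
    have "norm (q x s) \<le> Kq" using Kq x s divide_one_plus_square_le[OF x Kq(1)] by (meson order_trans)
    then show "norm (mass_density x s) \<le> Kq * Kq / (1 + x)\<^sup>2"
      unfolding mass_density_def using Kq x s by (intro norm_mult_le_decay) auto
  qed
qed

lemma integral_mass_flux_vanishes:
  assumes t: "t \<in> {0..T}"
  shows "(\<lambda>n. integral {0..t} (mass_flux (real n))) \<longlonglongrightarrow> 0"
proof -
  obtain Kq where Kq: "0 \<le> Kq" "\<forall>x\<ge>0. \<forall>s\<in>{0..T}. norm (q x s) \<le> Kq / (1 + x)\<^sup>2"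
    using decay_mixed[of 0 0] by auto
  obtain Kx where Kx: "0 \<le> Kx" "\<forall>x\<ge>0. \<forall>s\<in>{0..T}. norm (px q x s) \<le> Kx / (1 + x)\<^sup>2"
    using decay_mixed[of 1 0] by auto
  have bound: "norm (integral {0..t} (mass_flux X)) \<le> 2 * (Kq * Kx) * t * (1 / (1 + X)\<^sup>2)" if X: "0 \<le> X" for X
  proof -
    have "norm (mass_flux X s) \<le> 2 * (Kq * Kx) / (1 + X)\<^sup>2" if "s \<in> {0..t}" for s
    proof -
      have s: "s \<in> {0..T}" using that t by auto
      have "norm (px q X s) \<le> Kx" using Kx X s divide_one_plus_square_le[OF X Kx(1)] by (meson order_trans)
      then have "norm (mass_flux X s) \<le> (Kq * Kx) / (1 + X)\<^sup>2 + (Kq * Kx) / (1 + X)\<^sup>2"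
        unfolding mass_flux_def using Kq X s
        by (intro order_trans[OF norm_triangle_ineq4 add_mono] norm_mult_le_decay) auto
      then show ?thesis by simp
    qed
    moreover have "(mass_flux X has_integral integral {0..t} (mass_flux X)) {0..t}"
      using t X by (intro integrable_integral integrable_continuous_interval continuous_on_subset[OF continuous_mass_flux]) auto
    ultimately have "norm (integral {0..t} (mass_flux X))
        \<le> 2 * (Kq * Kx) / (1 + X)\<^sup>2 * Henstock_Kurzweil_Integration.content {0..t}"
      using Kq Kx by (intro has_integral_bound_real[where S="{}"]) auto
    then show ?thesis using t by simp
  qed
  have "(\<lambda>n. 1 / (1 + real n)\<^sup>2) \<longlonglongrightarrow> 0" by real_asymp
  from tendsto_mult_left[OF this, of "2 * (Kq * Kx) * t"]
  have "(\<lambda>n. 2 * (Kq * Kx) * t * (1 / (1 + real n)\<^sup>2)) \<longlonglongrightarrow> 0" by simp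
  moreover have "\<forall>\<^sub>F n in sequentially.
      norm (integral {0..t} (mass_flux (real n))) \<le> 2 * (Kq * Kx) * t * (1 / (1 + real n)\<^sup>2)"
    by (intro always_eventually allI bound) simp
  ultimately show ?thesis by (rule Lim_null_comparison[rotated])
qed

lemma mass_balance:
  assumes t: "t \<in> {0<..<T}"
  shows "integral {0..} (\<lambda>x. mass_density x t) - integral {0..} (\<lambda>x. mass_density x 0) = - \<i> * integral {0..t} (mass_flux 0)"
proof -
  have tT: "t \<in> {0..T}" and T0: "0 \<in> {0..T}" using t T_pos by auto
  have "(\<lambda>n. integral {0..0 + real n} (\<lambda>x. mass_density x t) - integral {0..0 + real n} (\<lambda>x. mass_density x 0))
      \<longlonglongrightarrow> integral {0..} (\<lambda>x. mass_density x t) - integral {0..} (\<lambda>x. mass_density x 0)"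
    using tT T0 by (intro tendsto_diff LIMSEQ_integral_atLeastAtMost absolutely_integrable_mass_density)
  moreover have "(\<lambda>n. \<i> * integral {0..t} (mass_flux (real n)) - \<i> * integral {0..t} (mass_flux 0))
      \<longlonglongrightarrow> - \<i> * integral {0..t} (mass_flux 0)"
    using integral_mass_flux_vanishes[OF tT] by (auto intro!: tendsto_eq_intros)
  then have "(\<lambda>n. integral {0..0 + real n} (\<lambda>x. mass_density x t) - integral {0..0 + real n} (\<lambda>x. mass_density x 0))
      \<longlonglongrightarrow> - \<i> * integral {0..t} (mass_flux 0)"
    by (simp add: mass_balance_truncated[OF t])
  ultimately show ?thesis using LIMSEQ_unique by blast
qed

lemma mass_boundary_flux:
  assumes t: "t \<in> {0<..<T}"
  shows "mass (\<lambda>x. q x t)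
    = mass (\<lambda>x. q x 0) - \<i> * integral {0..t} (\<lambda>\<tau>. cnj (g0 q \<tau>) * g1 q \<tau> - g0 q \<tau> * cnj (g1 q \<tau>))"
proof -
  have "mass_flux 0 = (\<lambda>\<tau>. cnj (g0 q \<tau>) * g1 q \<tau> - g0 q \<tau> * cnj (g1 q \<tau>))"
    by (simp add: mass_flux_def g0_def g1_def fun_eq_iff)
  then show ?thesis using mass_balance[OF t] by (simp add: mass_def mass_density_def algebra_simps)
qed

end

section \<open>The expansion of c\<close>

lemma exp_double_shift:
  fixes k Q M :: complex and x \<xi> :: real
  shows "exp (- \<i> * k * complex_of_real (x - \<xi>)) * Q * M * exp (- \<i> * k * complex_of_real (x - \<xi>))
       = exp (2 * \<i> * k * complex_of_real (\<xi> - x)) * Q * M"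
proof -
  have "- \<i> * k * complex_of_real (x - \<xi>) + - \<i> * k * complex_of_real (x - \<xi>) = 2 * \<i> * k * complex_of_real (\<xi> - x)"
    by (simp add: algebra_simps)
  then have "exp (- \<i> * k * complex_of_real (x - \<xi>)) * exp (- \<i> * k * complex_of_real (x - \<xi>))
      = exp (2 * \<i> * k * complex_of_real (\<xi> - x))"
    by (metis mult_exp_exp)
  then show ?thesis by (metis mult.assoc mult.commute)
qed

lemma solves_mu3_col2_zs_jost:
  assumes mu3: "solves_mu3_col2 lam T q M12 M22" and s: "s \<in> {0..T}" and k: "0 \<le> Im k" "1 \<le> norm k"
    and pot: "zs_potential (\<lambda>x. q x s) u1 u2 u3 K lam"
  obtains B where "zs_jost (\<lambda>x. q x s) u1 u2 u3 K lam k (\<lambda>x. M12 x s k) (\<lambda>x. M22 x s k) B"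
proof -
  obtain B where B: "\<And>x. 0 \<le> x \<Longrightarrow> norm (M12 x s k) \<le> B \<and> norm (M22 x s k) \<le> B"
    and eqs: "\<And>x. 0 \<le> x \<Longrightarrow>
      ((\<lambda>\<xi>. exp (- \<i> * k * complex_of_real (x - \<xi>)) * q \<xi> s * M22 \<xi> s k
          * exp (- \<i> * k * complex_of_real (x - \<xi>))) has_integral (- M12 x s k)) {x..} \<and>
      ((\<lambda>\<xi>. complex_of_real lam * cnj (q \<xi> s) * M12 \<xi> s k) has_integral (1 - M22 x s k)) {x..}"
    using mu3 s k unfolding solves_mu3_col2_def by blast
  have "zs_jost (\<lambda>x. q x s) u1 u2 u3 K lam k (\<lambda>x. M12 x s k) (\<lambda>x. M22 x s k) B"
  proof (rule zs_jost.intro[OF pot], unfold_locales)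
    show "((\<lambda>\<xi>. exp (2 * \<i> * k * complex_of_real (\<xi> - x)) * q \<xi> s * M22 \<xi> s k) has_integral - M12 x s k) {x..}"
      if "0 \<le> x" for x
      using eqs[OF that] by (simp only: exp_double_shift)
  qed (use k B eqs in auto)
  then show ?thesis by (rule that)
qed

lemma solves_mu3_col2_expansions:
  assumes mu3: "solves_mu3_col2 lam T q M12 M22" and s: "s \<in> {0..T}" and k: "0 \<le> Im k" "1 \<le> norm k"
    and pot: "zs_potential (\<lambda>x. q x s) (\<lambda>x. px q x s) u2 u3 K lam"
  shows "norm (M12 0 s k - q 0 s / (2 * \<i>) / k
      - (px q 0 s / 4 + complex_of_real lam * q 0 s * mass (\<lambda>x. q x s) / 4) / k\<^sup>2) \<le> zs_potential.C_m1 K / norm k ^ 3"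
    and "norm (M22 0 s k - 1 + complex_of_real lam * mass (\<lambda>x. q x s) / (2 * \<i>) / k)
      \<le> zs_potential.C_m2 K / norm k ^ 2"
proof -
  obtain B where jost: "zs_jost (\<lambda>x. q x s) (\<lambda>x. px q x s) u2 u3 K lam k (\<lambda>x. M12 x s k) (\<lambda>x. M22 x s k) B"
    using solves_mu3_col2_zs_jost[OF mu3 s k pot] .
  show "norm (M12 0 s k - q 0 s / (2 * \<i>) / k
      - (px q 0 s / 4 + complex_of_real lam * q 0 s * mass (\<lambda>x. q x s) / 4) / k\<^sup>2) \<le> zs_potential.C_m1 K / norm k ^ 3"
    using zs_jost.m1_zero_expansion[OF jost] by (simp only: divide_divide_eq_left)
  show "norm (M22 0 s k - 1 + complex_of_real lam * mass (\<lambda>x. q x s) / (2 * \<i>) / k)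
      \<le> zs_potential.C_m2 K / norm k ^ 2"
    using zs_jost.m2_zero_expansion[OF jost] by (simp only: divide_divide_eq_left)
qed

theorem lemma3p1:
  fixes lam T :: real
    and q :: "real \<Rightarrow> real \<Rightarrow> complex"
    and Phi1 Phi2 :: "real \<Rightarrow> complex \<Rightarrow> complex"
    and M12 M22 :: "real \<Rightarrow> real \<Rightarrow> complex \<Rightarrow> complex"
    and a b :: "complex \<Rightarrow> complex"
    and F12 c :: "real \<Rightarrow> complex \<Rightarrow> complex"
  assumes lam: "lam = 1 \<or> lam = -1"
    and T: "0 < T"
    and smooth: "smooth_decaying T q"
    and nls: "solves_NLS lam T q"
    and Phi: "solves_Phi lam T q Phi1 Phi2"
    and mu3: "solves_mu3_col2 lam T q M12 M22"
    and a_def: "\<And>k. a k = M22 0 0 k"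
    and b_def: "\<And>k. b k = M12 0 0 k"
    and F12_def: "\<And>t k. F12 t k = M12 0 t k"
    and c_def: "\<And>t k. c t k = F12 t k / a k"
  shows "\<forall>t\<in>{0<..<T}. \<exists>C R. \<forall>k\<in>D1. norm k \<ge> R \<longrightarrow>
           norm (c t k - (g0 q t / (2 * \<i>)) / k
                  - (g1 q t / 4 - (\<i> * g0 q t / 2) * (complex_of_real lam / 2) *
                       integral {0..t} (\<lambda>\<tau>. cnj (g0 q \<tau>) * g1 q \<tau> - g0 q \<tau> * cnj (g1 q \<tau>)))
                    / k\<^sup>2)
           \<le> C / norm k ^ 3"
proof (unfold g0_def g1_def, intro ballI)
  fix t assume t: "t \<in> {0<..<T}"
  interpret nls_solution lam T q using smooth nls T by unfold_locales
  have tT: "t \<in> {0..T}" and T0: "0 \<in> {0..T}" using t T by auto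
  obtain K where pot: "\<And>s. s \<in> {0..T} \<Longrightarrow>
      zs_potential (\<lambda>x. q x s) (\<lambda>x. px q x s) (\<lambda>x. px (px q) x s) (\<lambda>x. px (px (px q)) x s) K lam"
    using zs_potential_slices lam by force
  let ?A = "q 0 t / (2 * \<i>)"
  let ?B = "px q 0 t / 4 - (\<i> * q 0 t / 2) * (complex_of_real lam / 2) *
    integral {0..t} (\<lambda>\<tau>. cnj (q 0 \<tau>) * px q 0 \<tau> - q 0 \<tau> * cnj (px q 0 \<tau>))"
  let ?D = "complex_of_real lam * mass (\<lambda>x. q x 0) / (2 * \<i>)"
  have coefficient: "px q 0 t / 4 + complex_of_real lam * q 0 t * mass (\<lambda>x. q x t) / 4 = ?B - ?A * ?D"
    unfolding mass_boundary_flux[OF t, unfolded g0_def g1_def] by (simp add: field_simps)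
  show "\<exists>C R. \<forall>k\<in>D1. norm k \<ge> R \<longrightarrow> norm (c t k - ?A / k - ?B / k\<^sup>2) \<le> C / norm k ^ 3"
    unfolding c_def F12_def a_def
  proof (rule quotient_expansion[where D="?D"])
    show "0 \<le> zs_potential.C_m2 K" using zs_potential.constants_nonneg[OF pot[OF T0]] by simp
    fix k assume "k \<in> D1" "1 \<le> norm k"
    then have k: "0 \<le> Im k" "1 \<le> norm k" by (auto simp: D1_def)
    show "norm (M12 0 t k - ?A / k - (?B - ?A * ?D) / k\<^sup>2) \<le> zs_potential.C_m1 K / norm k ^ 3"
      unfolding coefficient[symmetric] by (rule solves_mu3_col2_expansions(1)[OF mu3 tT k pot[OF tT]])
    show "norm (M22 0 0 k - 1 + ?D / k) \<le> zs_potential.C_m2 K / norm k ^ 2"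
      by (rule solves_mu3_col2_expansions(2)[OF mu3 T0 k pot[OF T0]])
  qed
qed

end
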